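(* Let Assumption (H0) hold and consider the sequences $x_t^k$ and $\mathcal{Q}_t^k$ generated by REDDP, where $\lambda_{T,k}=0$ for every $k\ge1$ and $\lim_{k\to+\infty}\lambda_{t,k}=0$ for $t=1,\ldots,T-1$. Then $\mathcal{Q}_{T+1}(x_T^k)=\mathcal{Q}_{T+1}^k(x_T^k)$, $\mathcal{Q}_T(x_{T-1}^k)=\mathcal{Q}_T^k(x_{T-1}^k)=\underline{\mathcal{Q}}_T^k(x_{T-1}^k)$ for all $k$, and for $t=2,\ldots,T-1$, $$\lim_{k\to+\infty}\big(\mathcal{Q}_t(x_{t-1}^k)-\mathcal{Q}_t^k(x_{t-1}^k)\big)=\lim_{k\to+\infty}\big(\mathcal{Q}_t(x_{t-1}^k)-\underline{\mathcal{Q}}_t^k(x_{t-1}^k)\big)=0.$$ Moreover, (i) $\lim_{k\to+\infty}\underline{\mathcal{Q}}_1^k(x_0)=\lim_{k\to+\infty}\bar F_1^{k-1}(x_0,x_1^k,x_1^{P,k})=\mathcal{Q}_1(x_0)$, the optimal value of the problem; and (ii) every accumulation point $(x_1^*,\ldots,x_T^* )$ of the sequence $(x_1^k,\ldots,x_T^k)_k$ is an optimal solution of the problem $\min\sum_{t=1}^Tf_t(x_{t-1},x_t)$ s.t. $x_t\in X_t(x_{t-1})$, $t=1,\ldots,T$.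
   Context: Fix integers $T\ge 1$, $n,p,q\ge 1$ and $x_0\in\mathbb{R}^n$; set $\mathcal{X}_0:=\{x_0\}$. For $t=1,\ldots,T$ let $\mathcal{X}_t\subset\mathbb{R}^n$, $f_t:\mathbb{R}^n\times\mathbb{R}^n\to\mathbb{R}\cup\{+\infty\}$, $g_t=(g_{t,1},\ldots,g_{t,p}):\mathbb{R}^n\times\mathbb{R}^n\to\mathbb{R}^p$, $q\times n$ matrices $A_t,B_t$ and $b_t\in\mathbb{R}^q$. Define $X_t(x_{t-1})=\{x_t\in\mathcal{X}_t: A_tx_t+B_tx_{t-1}=b_t,\ g_t(x_{t-1},x_t)\le 0\}$; the problem is $\min\sum_{t=1}^Tf_t(x_{t-1},x_t)$ s.t. $x_t\in X_t(x_{t-1})$. Define $\mathcal{Q}_{T+1}\equiv0$ and for $t=T,\ldots,1$, $\mathcal{Q}_t(x_{t-1})=\inf\{f_t(x_{t-1},x_t)+\mathcal{Q}_{t+1}(x_t):x_t\in X_t(x_{t-1})\}$. For $\varepsilon>0$, $\mathcal{X}^\varepsilon:=\mathcal{X}+\varepsilon\mathbb{B}_n$, $\mathbb{B}_n$ the closed Euclidean unit ball. Assumption (H0): for $t=1,\ldots,T$: (a) $\mathcal{X}_t$ nonempty, convex, compact; (b) $f_t$ proper, convex, lower semicontinuous; (c) each $g_{t,i}$ convex and lower semicontinuous; (d) there is $\varepsilon>0$ with $\mathcal{X}_{t-1}^\varepsilon\times\mathcal{X}_t\subset\mathrm{dom}(f_t)$ and for every $x_{t-1}\in\mathcal{X}_{t-1}^\varepsilon$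 there is $x_t\in\mathcal{X}_t$ with $g_t(x_{t-1},x_t)\le0$, $A_tx_t+B_tx_{t-1}=b_t$; (e) if $t\ge2$, there exists $(\bar x_{t,t-1},\bar x_{t,t})\in(\mathcal{X}_{t-1}\times\mathrm{ri}(\mathcal{X}_t))\cap\mathrm{ri}(\{(y,x):g_t(y,x)\le0\})$ with $\bar x_{t,t}\in\mathcal{X}_t$, $g_t(\bar x_{t,t-1},\bar x_{t,t})\le0$, $A_t\bar x_{t,t}+B_t\bar x_{t,t-1}=b_t$. REDDP algorithm: initial functions $\mathcal{Q}_t^0:\mathcal{X}_{t-1}\to\mathbb{R}\cup\{-\infty\}$, $t=2,\ldots,T$, with $\mathcal{Q}_t^0\le\mathcal{Q}_t$ (e.g. $\mathcal{Q}_t^0\equiv-\infty$); $\mathcal{Q}_{T+1}^k\equiv0$ for all $k\ge0$. Given nonnegative penalization parameters $\lambda_{t,k}$ with $\lambda_{t,1}=0$ and $\lambda_{T,k}=0$, and arbitrary prox-centers $x_t^{P,k}\in\mathcal{X}_t$. At iteration $k=1,2,\ldots$: Forward pass: $x_0^k=x_0$ and for $t=1,\ldots,T$, $x_t^k\in\arg\min\{\bar F_t^{k-1}(x_{t-1}^k,x_t,x_t^{P,k}): x_t\in X_t(x_{t-1}^k)\}$, where $\bar F_t^{k-1}(x_{t-1},x_t,x^P)=f_t(x_{t-1},x_t)+\mathcal{Q}_{t+1}^{k-1}(x_t)+\lambda_{t,k}\|x_t-x^P\|^2$. Backward pass: for $t=T,\ldots,2$, with $\underline{\mathcal{Q}}_t^k(y):=\inf\{f_t(y,x_t)+\mathcal{Q}_{t+1}^k(x_t):x_t\in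 X_t(y)\}$, take $\beta_t^k\in\partial\underline{\mathcal{Q}}_t^k(x_{t-1}^k)$, form $\mathcal{C}_t^k(y)=\underline{\mathcal{Q}}_t^k(x_{t-1}^k)+\langle\beta_t^k,y-x_{t-1}^k\rangle$ and set $\mathcal{Q}_t^k=\max\{\mathcal{Q}_t^{k-1},\mathcal{C}_t^k\}$. Also $\underline{\mathcal{Q}}_1^k(x_0):=\inf\{f_1(x_0,x_1)+\mathcal{Q}_2^k(x_1):x_1\in X_1(x_0)\}$. *)

theory Defs
  imports "HOL-Analysis.Analysis" "HOL-Library.Extended_Real"
begin

definition proper_fun :: "('a \<Rightarrow> ereal) \<Rightarrow> bool" where
  "proper_fun F \<longleftrightarrow> (\<forall>z. F z \<noteq> -\<infinity>) \<and> (\<exists>z. F z \<noteq> \<infinity>)"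

definition convex_fun :: "('a::real_vector \<Rightarrow> ereal) \<Rightarrow> bool" where
  "convex_fun F \<longleftrightarrow> convex {(z, r::real). F z \<le> ereal r}"

definition lsc_fun :: "('a::topological_space \<Rightarrow> ereal) \<Rightarrow> bool" where
  "lsc_fun F \<longleftrightarrow> (\<forall>c. closed {z. F z \<le> c})"

definition lsc_real :: "('a::topological_space \<Rightarrow> real) \<Rightarrow> bool" where
  "lsc_real F \<longleftrightarrow> (\<forall>c. closed {z. F z \<le> c})"

definition is_subgrad :: "('a::real_inner \<Rightarrow> ereal) \<Rightarrow> 'a \<Rightarrow> 'a \<Rightarrow> bool" where
  "is_subgrad F x \<beta> \<longleftrightarrow> F x \<noteq> \<infinity> \<and> F x \<noteq> -\<infinity> \<and>
      (\<forall>y. F x + ereal (\<beta> \<bullet> (y - x)) \<le> F y)"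

definition enlarge :: "real \<Rightarrow> 'a::real_normed_vector set \<Rightarrow> 'a set" where
  "enlarge \<epsilon> X = {x + e | x e. x \<in> X \<and> norm e \<le> \<epsilon>}"

definition Xfeas :: "(nat \<Rightarrow> (real^'n) set) \<Rightarrow> (nat \<Rightarrow> real^'n^'q) \<Rightarrow> (nat \<Rightarrow> real^'n^'q)
    \<Rightarrow> (nat \<Rightarrow> real^'q) \<Rightarrow> (nat \<Rightarrow> real^'n \<Rightarrow> real^'n \<Rightarrow> real^'p)
    \<Rightarrow> nat \<Rightarrow> real^'n \<Rightarrow> (real^'n) set" where
  "Xfeas Xs A B b g t y = {x \<in> Xs t. A t *v x + B t *v y = b t \<and> (\<forall>i. g t y x $ i \<le> 0)}"

text \<open>Backward recursion: Qrec f X T s is Q_{T+1-s}.\<close>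
fun Qrec :: "(nat \<Rightarrow> 'a \<Rightarrow> 'a \<Rightarrow> ereal) \<Rightarrow> (nat \<Rightarrow> 'a \<Rightarrow> 'a set) \<Rightarrow> nat \<Rightarrow> nat \<Rightarrow> 'a \<Rightarrow> ereal" where
  "Qrec f X T 0 = (\<lambda>_. 0)"
| "Qrec f X T (Suc s) = (\<lambda>y. INF x\<in>X (T - s) y. f (T - s) y x + Qrec f X T s x)"

definition Qval :: "(nat \<Rightarrow> 'a \<Rightarrow> 'a \<Rightarrow> ereal) \<Rightarrow> (nat \<Rightarrow> 'a \<Rightarrow> 'a set) \<Rightarrow> nat \<Rightarrow> nat \<Rightarrow> 'a \<Rightarrow> ereal" where
  "Qval f X T t = Qrec f X T (T + 1 - t)"

definition feasible_traj :: "(nat \<Rightarrow> 'a \<Rightarrow> 'a set) \<Rightarrow> nat \<Rightarrow> 'a \<Rightarrow> (nat \<Rightarrow> 'a) \<Rightarrow> bool" where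
  "feasible_traj X T x0 x \<longleftrightarrow> x 0 = x0 \<and> (\<forall>t\<in>{1..T}. x t \<in> X t (x (t - 1)))"

definition objective :: "(nat \<Rightarrow> 'a \<Rightarrow> 'a \<Rightarrow> ereal) \<Rightarrow> nat \<Rightarrow> (nat \<Rightarrow> 'a) \<Rightarrow> ereal" where
  "objective f T x = (\<Sum>t = 1..T. f t (x (t - 1)) (x t))"

definition optval :: "(nat \<Rightarrow> 'a \<Rightarrow> 'a \<Rightarrow> ereal) \<Rightarrow> (nat \<Rightarrow> 'a \<Rightarrow> 'a set) \<Rightarrow> nat \<Rightarrow> 'a \<Rightarrow> ereal" where
  "optval f X T x0 = (INF x\<in>{x. feasible_traj X T x0 x}. objective f T x)"

definition optimal_solution :: "(nat \<Rightarrow> 'a \<Rightarrow> 'a \<Rightarrow> ereal) \<Rightarrow> (nat \<Rightarrow> 'a \<Rightarrow> 'a set) \<Rightarrow> nat \<Rightarrow> 'a \<Rightarrow> (nat \<Rightarrow> 'a) \<Rightarrow> bool" where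
  "optimal_solution f X T x0 x \<longleftrightarrow> feasible_traj X T x0 x \<and>
     (\<forall>y. feasible_traj X T x0 y \<longrightarrow> objective f T x \<le> objective f T y)"

text \<open>Qlow f X Qk t y = underline Q_t^k(y), where Qk t = Q_t^k for the current k.\<close>
definition Qlow :: "(nat \<Rightarrow> 'a \<Rightarrow> 'a \<Rightarrow> ereal) \<Rightarrow> (nat \<Rightarrow> 'a \<Rightarrow> 'a set) \<Rightarrow> (nat \<Rightarrow> 'a \<Rightarrow> ereal) \<Rightarrow> nat \<Rightarrow> 'a \<Rightarrow> ereal" where
  "Qlow f X Qk t y = (INF x\<in>X t y. f t y x + Qk (t + 1) x)"

text \<open>Fbar f Qk lam t y x xP = bar F_t(y, x, xP) built from Qk t = Q_t^{k-1} and lam = lambda_{t,k}.\<close>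
definition Fbar :: "(nat \<Rightarrow> 'a \<Rightarrow> 'a \<Rightarrow> ereal) \<Rightarrow> (nat \<Rightarrow> 'a::real_normed_vector \<Rightarrow> ereal) \<Rightarrow> real \<Rightarrow> nat \<Rightarrow> 'a \<Rightarrow> 'a \<Rightarrow> 'a \<Rightarrow> ereal" where
  "Fbar f Qk lam t y x xP = f t y x + Qk (t + 1) x + ereal (lam * (norm (x - xP))\<^sup>2)"

end

theory Submission
  imports Defs
begin

text \<open>Under (H0) each cost-to-go function \<open>Q\<^sub>t\<close> is finite, convex and bounded below on a
  neighbourhood \<open>X\<^sub>t\<^sub>-\<^sub>1 + \<epsilon> B\<close> of \<open>X\<^sub>t\<^sub>-\<^sub>1\<close>. Hence it is uniformly continuous on \<open>X\<^sub>t\<^sub>-\<^sub>1\<close>, and the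
  slopes \<open>\<beta>\<^sub>t\<^sup>k\<close> of the cuts, which are valid lower bounds of \<open>Q\<^sub>t\<close>, stay bounded. A compactness
  argument then shows that once the cuts are asymptotically exact at the trial points, so is the
  previous model \<open>Q\<^sub>t\<^sup>k\<^sup>-\<^sup>1\<close>. The optimality of \<open>x\<^sub>t\<^sup>k\<close> in the forward pass, with penalization
  \<open>\<lambda>\<^sub>t\<^sub>,\<^sub>k \<rightarrow> 0\<close>, transfers asymptotic exactness of the model at stage \<open>t + 1\<close> to the cut at stage \<open>t\<close>;
  backward induction from \<open>Q\<^sub>T\<^sub>+\<^sub>1\<^sup>k = Q\<^sub>T\<^sub>+\<^sub>1 = 0\<close> yields all gap statements. Telescoping, the costs of
  the trial trajectories converge to \<open>Q\<^sub>1(x\<^sub>0)\<close>, and lower semicontinuity passes this bound to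
  their accumulation points.\<close>

lemma lsc_fun_open_superlevel:
  assumes "lsc_fun F" shows "open {z. c < F z}"
proof -
  have "{z. c < F z} = - {z. F z \<le> c}" by auto
  then show ?thesis using assms unfolding lsc_fun_def by (metis open_Compl)
qed

lemma lsc_fun_bounded_below_on_compact:
  assumes "lsc_fun F" and "compact K" and "\<forall>z\<in>K. F z \<noteq> -\<infinity>"
  obtains m where "\<forall>z\<in>K. ereal m \<le> F z"
proof -
  define U where "U n = {z. ereal (- real n) < F z}" for n :: nat
  have cover: "K \<subseteq> (\<Union>n. U n)"
  proof
    fix z assume "z \<in> K"
    then obtain n :: nat where "ereal (- real n) < F z"
    proof (cases "F z")
      case (real a)
      obtain n :: nat where "- a < real n" using reals_Archimedean2 by blast
      with real show ?thesis using that[of n] by auto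
    next
      case PInf
      then show ?thesis using that[of 0] by simp
    qed (use \<open>z \<in> K\<close> assms(3) in auto)
    then show "z \<in> (\<Union>n. U n)" unfolding U_def by blast
  qed
  have "open (U n)" for n unfolding U_def by (rule lsc_fun_open_superlevel[OF assms(1)])
  then obtain N where N: "finite N" "K \<subseteq> (\<Union>n\<in>N. U n)"
    using compactE_image[OF assms(2) _ cover] by metis
  have "ereal (- real (Max (insert 0 N))) \<le> F z" if z: "z \<in> K" for z
  proof -
    obtain n where "n \<in> N" "ereal (- real n) < F z" using N z unfolding U_def by blast
    moreover have "ereal (- real (Max (insert 0 N))) \<le> ereal (- real n)"
      using N(1) \<open>n \<in> N\<close> by simp
    ultimately show ?thesis by (meson less_imp_le order_trans)
  qed
  then show ?thesis using that by blast
qed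

lemma convex_funD:
  fixes F :: "'a::real_vector \<Rightarrow> ereal"
  assumes "convex_fun F" "F p1 \<le> ereal a1" "F p2 \<le> ereal a2" "0 \<le> u" "u \<le> 1"
  shows "F ((1 - u) *\<^sub>R p1 + u *\<^sub>R p2) \<le> ereal ((1 - u) * a1 + u * a2)"
proof -
  have "(1 - u) *\<^sub>R (p1, a1) + u *\<^sub>R (p2, a2) \<in> {(z, r::real). F z \<le> ereal r}"
    using assms unfolding convex_fun_def by (intro convexD) auto
  then show ?thesis by simp
qed

lemma enlarge_eq_sums: "enlarge e K = (\<Union>x\<in>K. \<Union>y\<in>cball 0 e. {x + y})"
  unfolding enlarge_def by (auto simp: dist_norm) blast

lemma compact_enlarge:
  fixes K :: "'a::euclidean_space set" shows "compact K \<Longrightarrow> compact (enlarge e K)"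
  unfolding enlarge_eq_sums by (intro compact_sums') (auto simp: compact_cball)

lemma convex_enlarge: "convex K \<Longrightarrow> convex (enlarge e K)"
  unfolding enlarge_eq_sums by (intro convex_sums) auto

lemma subset_enlarge: "0 \<le> e \<Longrightarrow> K \<subseteq> enlarge e K"
  unfolding enlarge_def by force

lemma enlarge_mono: "d \<le> e \<Longrightarrow> enlarge d K \<subseteq> enlarge e K"
  unfolding enlarge_def by force

lemma add_in_enlarge: "x \<in> K \<Longrightarrow> norm d \<le> e \<Longrightarrow> x + d \<in> enlarge e K"
  unfolding enlarge_def by blast

text \<open>A convex function on \<open>K + e B\<close> is continuous on the open set \<open>K + e int B\<close>, which contains
  every smaller enlargement.\<close>
lemma continuous_on_enlarge_if_convex_on:
  fixes F :: "'a::euclidean_space \<Rightarrow> real"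
  assumes F: "convex_on (enlarge e K) F" and K: "convex K" and d: "d < e"
  shows "continuous_on (enlarge d K) F"
proof -
  define S where "S = (\<Union>x\<in>K. \<Union>y\<in>ball 0 e. {x + y})"
  have "S \<subseteq> enlarge e K"
    unfolding S_def by (auto simp: dist_norm intro!: add_in_enlarge)
  moreover have "convex S" "open S" unfolding S_def using K by (auto intro: convex_sums open_sums)
  ultimately have "continuous_on S F" using convex_on_subset[OF F] by (intro convex_on_continuous) auto
  moreover have "enlarge d K \<subseteq> S" unfolding S_def enlarge_def using d by (force simp: dist_norm)
  ultimately show ?thesis by (rule continuous_on_subset)
qed

lemma affine_minorant_slope_bound:
  fixes \<beta> x :: "'a::real_inner"
  assumes "0 \<le> \<delta>" and "\<forall>y. norm (y - x) \<le> \<delta> \<longrightarrow> c + \<beta> \<bullet> (y - x) \<le> M"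
  shows "c + \<delta> * norm \<beta> \<le> M"
proof (cases "\<beta> = 0")
  case True
  then show ?thesis using assms(2)[rule_format, of x] assms(1) by simp
next
  case False
  define y where "y = x + (\<delta> / norm \<beta>) *\<^sub>R \<beta>"
  have "norm (y - x) \<le> \<delta>" using assms(1) False by (simp add: y_def)
  moreover have "\<beta> \<bullet> (y - x) = \<delta> * norm \<beta>"
    using False by (simp add: y_def power2_norm_eq_inner[symmetric] power2_eq_square)
  ultimately show ?thesis using assms(2) by metis
qed

lemma tendsto_ereal_eventually_eq:
  assumes "eventually (\<lambda>k. u k = ereal (r k)) sequentially" and "r \<longlonglongrightarrow> c"
  shows "u \<longlonglongrightarrow> ereal c"
  using tendsto_cong[OF assms(1)] tendsto_ereal[OF assms(2)] by simp

lemma compact_frequently_close_pair: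
  fixes x :: "nat \<Rightarrow> 'a::metric_space" and P :: "nat \<Rightarrow> bool" and e :: real
  assumes K: "compact K" and x: "\<And>n. P n \<Longrightarrow> x n \<in> K" and e: "0 < e"
    and frequently: "\<And>M. \<exists>k\<ge>M. P k"
  obtains j k where "lb \<le> j" "j < k" "P j" "P k" "dist (x k) (x j) < e"
proof -
  have "\<forall>M. \<exists>k. Suc M \<le> k \<and> P k" using frequently by blast
  then obtain \<phi> where \<phi>: "\<And>M. Suc M \<le> \<phi> M" "\<And>M. P (\<phi> M)" by metis
  have "(x \<circ> \<phi>) n \<in> K" for n using x \<phi>(2) by simp
  then obtain l u where u: "strict_mono u" "((x \<circ> \<phi>) \<circ> u) \<longlonglongrightarrow> l"
    using compact_imp_seq_compact[OF K] unfolding seq_compact_def by metis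
  then have "Cauchy ((x \<circ> \<phi>) \<circ> u)" by (intro LIMSEQ_imp_Cauchy)
  then obtain M where M: "\<And>m n. M \<le> m \<Longrightarrow> M \<le> n \<Longrightarrow> dist (((x \<circ> \<phi>) \<circ> u) m) (((x \<circ> \<phi>) \<circ> u) n) < e"
    using e unfolding Cauchy_def by metis
  define i where "i = max M lb"
  define j where "j = \<phi> (u i)"
  have "i \<le> u i" "j \<le> u j" using u(1) by (auto simp: seq_suble)
  then have "lb \<le> j" "j < \<phi> (u j)" "M \<le> i" "M \<le> j"
    using \<phi>(1)[of "u i"] \<phi>(1)[of "u j"] unfolding i_def j_def by auto
  moreover have "dist (x (\<phi> (u j))) (x j) < e" using M[OF \<open>M \<le> j\<close> \<open>M \<le> i\<close>] unfolding j_def by simp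
  ultimately show ?thesis using \<phi>(2) unfolding j_def by (intro that) auto
qed

text \<open>Otherwise the gap stays above some \<open>\<eta>\<close> infinitely
  often; two such trial points come arbitrarily close, and the cut made at the earlier one
  closes the gap at the later one.\<close>
lemma cut_gap_tendsto_zero:
  fixes x \<beta> :: "nat \<Rightarrow> 'a::real_inner" and q :: "'a \<Rightarrow> real"
  assumes K: "compact K" and x: "\<And>k. N \<le> k \<Longrightarrow> x k \<in> K"
    and uc: "uniformly_continuous_on K q"
    and \<beta>: "\<And>j. N \<le> j \<Longrightarrow> norm (\<beta> j) \<le> L"
    and exact: "(\<lambda>k. q (x k) - c k) \<longlonglongrightarrow> 0"
    and cut: "\<And>j k. N \<le> j \<Longrightarrow> j < k \<Longrightarrow> c j + \<beta> j \<bullet> (x k - x j) \<le> m k"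
    and valid: "\<And>k. N < k \<Longrightarrow> m k \<le> q (x k)"
  shows "(\<lambda>k. q (x k) - m k) \<longlonglongrightarrow> 0"
proof (rule ccontr)
  define gap where "gap k = q (x k) - m k" for k
  have L: "0 \<le> L" using \<beta>[of N] norm_ge_zero order_trans by blast
  assume "\<not> (\<lambda>k. q (x k) - m k) \<longlonglongrightarrow> 0"
  then obtain \<eta> :: real where eta: "\<eta> > 0" and bad: "\<And>M. \<exists>k\<ge>M. \<eta> \<le> \<bar>gap k\<bar>"
    unfolding LIMSEQ_iff gap_def by (auto simp: not_less)
  have frequently: "\<exists>k\<ge>M. N \<le> k \<and> \<eta> \<le> gap k" for M
  proof -
    obtain k where k: "max M (Suc N) \<le> k" "\<eta> \<le> \<bar>gap k\<bar>" using bad by blast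
    then have "0 \<le> gap k" using valid[of k] unfolding gap_def by simp
    then show ?thesis using k by (intro exI[of _ k]) simp
  qed
  obtain d where d: "d > 0"
    "\<And>a a'. a \<in> K \<Longrightarrow> a' \<in> K \<Longrightarrow> dist a' a < d \<Longrightarrow> dist (q a') (q a) < \<eta> / 3"
    using uc eta unfolding uniformly_continuous_on_def by (metis divide_pos_pos zero_less_numeral)
  obtain N1 where N1: "\<And>n. n \<ge> N1 \<Longrightarrow> \<bar>q (x n) - c n\<bar> < \<eta> / 3"
    using exact eta unfolding LIMSEQ_iff by (metis diff_zero divide_pos_pos real_norm_def zero_less_numeral)
  define e where "e = min d (\<eta> / (3 * (L + 1)))"
  have "e > 0" unfolding e_def using d eta L by auto
  moreover have "x n \<in> K" if "N \<le> n \<and> \<eta> \<le> gap n" for n using x that by blast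
  ultimately obtain j k where jk: "max N N1 \<le> j" "j < k" "N \<le> k \<and> \<eta> \<le> gap k"
    and dkj: "dist (x k) (x j) < e"
    using compact_frequently_close_pair[where P = "\<lambda>n. N \<le> n \<and> \<eta> \<le> gap n" and lb = "max N N1",
        OF K _ _ frequently] by metis
  have "\<bar>\<beta> j \<bullet> (x k - x j)\<bar> \<le> norm (\<beta> j) * norm (x k - x j)" by (rule Cauchy_Schwarz_ineq2)
  also have "\<dots> \<le> L * dist (x k) (x j)" using \<beta> jk by (simp add: dist_norm mult_right_mono)
  also have "\<dots> \<le> L * (\<eta> / (3 * (L + 1)))" using dkj L unfolding e_def by (intro mult_left_mono) auto
  also have "\<dots> \<le> \<eta> / 3" using L eta by (simp add: field_simps)
  finally have "\<bar>\<beta> j \<bullet> (x k - x j)\<bar> \<le> \<eta> / 3" .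
  moreover have "\<bar>q (x k) - q (x j)\<bar> < \<eta> / 3"
    using d(2)[of "x j" "x k"] x jk dkj unfolding e_def by (simp add: dist_real_def)
  moreover have "\<bar>q (x j) - c j\<bar> < \<eta> / 3" using N1 jk by simp
  moreover have "c j + \<beta> j \<bullet> (x k - x j) \<le> m k" using cut jk by simp
  ultimately have "gap k < \<eta>" unfolding gap_def abs_le_iff abs_less_iff by linarith
  then show False using jk by simp
qed

locale reddp =
  fixes T :: nat and x0 :: "real^'n"
    and Xs :: "nat \<Rightarrow> (real^'n) set"
    and f :: "nat \<Rightarrow> real^'n \<Rightarrow> real^'n \<Rightarrow> ereal"
    and g :: "nat \<Rightarrow> real^'n \<Rightarrow> real^'n \<Rightarrow> real^'p"
    and A B :: "nat \<Rightarrow> real^'n^'q" and b :: "nat \<Rightarrow> real^'q"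
    and lam :: "nat \<Rightarrow> nat \<Rightarrow> real"
    and xP :: "nat \<Rightarrow> nat \<Rightarrow> real^'n"
    and xk :: "nat \<Rightarrow> nat \<Rightarrow> real^'n"
    and Qk :: "nat \<Rightarrow> nat \<Rightarrow> real^'n \<Rightarrow> ereal"
    and beta :: "nat \<Rightarrow> nat \<Rightarrow> real^'n"
    and X :: "nat \<Rightarrow> real^'n \<Rightarrow> (real^'n) set"
  assumes X_def: "X = Xfeas Xs A B b g"
    and T1: "T \<ge> 1"
    and X0: "Xs 0 = {x0}"
    and H0a: "\<forall>t\<in>{1..T}. Xs t \<noteq> {} \<and> convex (Xs t) \<and> compact (Xs t)"
    and H0b: "\<forall>t\<in>{1..T}. proper_fun (case_prod (f t)) \<and> convex_fun (case_prod (f t))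
                 \<and> lsc_fun (case_prod (f t))"
    and H0c: "\<forall>t\<in>{1..T}. \<forall>i. convex_on UNIV (\<lambda>(y, x). g t y x $ i)
                 \<and> lsc_real (\<lambda>(y, x). g t y x $ i)"
    and H0d: "\<forall>t\<in>{1..T}. \<exists>\<epsilon>>0.
                 (\<forall>y\<in>enlarge \<epsilon> (Xs (t - 1)). \<forall>x\<in>Xs t. f t y x \<noteq> \<infinity>)
               \<and> (\<forall>y\<in>enlarge \<epsilon> (Xs (t - 1)). \<exists>x\<in>Xs t.
                     (\<forall>i. g t y x $ i \<le> 0) \<and> A t *v x + B t *v y = b t)"
    and init: "\<forall>t\<in>{2..T}. \<forall>y\<in>Xs (t - 1). Qk 0 t y \<noteq> \<infinity> \<and> Qk 0 t y \<le> Qval f X T t y"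
    and QT1: "\<forall>k. Qk k (T + 1) = (\<lambda>_. 0)"
    and lam_nonneg: "\<forall>t\<in>{1..T}. \<forall>k\<ge>1. lam t k \<ge> 0"
    and lam_T: "\<forall>k\<ge>1. lam T k = 0"
    and lam_lim: "\<forall>t\<in>{1..T-1}. (\<lambda>k. lam t k) \<longlonglongrightarrow> 0"
    and xP_in: "\<forall>t\<in>{1..T}. \<forall>k\<ge>1. xP t k \<in> Xs t"
    and fwd0: "\<forall>k\<ge>1. xk k 0 = x0"
    and fwd: "\<forall>k\<ge>1. \<forall>t\<in>{1..T}. xk k t \<in> X t (xk k (t - 1)) \<and>
                 (\<forall>z\<in>X t (xk k (t - 1)).
                    Fbar f (Qk (k - 1)) (lam t k) t (xk k (t - 1)) (xk k t) (xP t k)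
                    \<le> Fbar f (Qk (k - 1)) (lam t k) t (xk k (t - 1)) z (xP t k))"
    and bwd: "\<forall>k\<ge>1. \<forall>t\<in>{2..T}.
                 is_subgrad (Qlow f X (Qk k) t) (xk k (t - 1)) (beta k t) \<and>
                 (\<forall>y\<in>Xs (t - 1). Qk k t y = max (Qk (k - 1) t y)
                    (Qlow f X (Qk k) t (xk k (t - 1)) + ereal (beta k t \<bullet> (y - xk k (t - 1)))))"
begin

abbreviation "Q \<equiv> Qval f X T"

text \<open>Real parts, used only where the values are known to be finite (\<open>real_of_ereal\<close> sends
  \<open>\<plusminus>\<infinity>\<close> to 0).\<close>
definition "qr t y = real_of_ereal (Q t y)"
definition "fr t y x = real_of_ereal (f t y x)"

lemma mem_X_iff: "x \<in> X t y \<longleftrightarrow> x \<in> Xs t \<and> A t *v x + B t *v y = b t \<and> (\<forall>i. g t y x $ i \<le> 0)"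
  by (simp add: X_def Xfeas_def)

lemma X_subset: "X t y \<subseteq> Xs t"
  using mem_X_iff by auto

lemma Q_Suc_T: "Q (Suc T) y = 0"
  by (simp add: Qval_def)

lemma Q_eq_INF:
  assumes "1 \<le> t" "t \<le> T"
  shows "Q t y = (INF x\<in>X t y. f t y x + Q (Suc t) x)"
proof -
  have "T + 1 - t = Suc (T - t)" "T - (T - t) = t" using assms by simp_all
  then show ?thesis unfolding Qval_def by simp
qed

lemma Xs_nonempty_convex_compact: "t \<le> T \<Longrightarrow> Xs t \<noteq> {} \<and> convex (Xs t) \<and> compact (Xs t)"
  using H0a X0 by (cases "t = 0") auto

text \<open>The radius \<open>\<epsilon>\<close> of (H0)(d), and the neighbourhood of \<open>X\<^sub>t\<^sub>-\<^sub>1\<close> on which \<open>Q\<^sub>t\<close> will be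
  shown finite and convex; beyond the horizon there is no constraint.\<close>
definition "margin t = (SOME e. e > 0 \<and>
    (\<forall>y\<in>enlarge e (Xs (t - 1)). \<forall>x\<in>Xs t. f t y x \<noteq> \<infinity>) \<and>
    (\<forall>y\<in>enlarge e (Xs (t - 1)). \<exists>x\<in>Xs t. (\<forall>i. g t y x $ i \<le> 0) \<and> A t *v x + B t *v y = b t))"

definition "Dext t = (if t \<le> T then enlarge (margin t) (Xs (t - 1)) else UNIV)"

lemma margin:
  assumes "1 \<le> t" "t \<le> T"
  shows margin_pos: "margin t > 0"
    and f_not_PInf: "y \<in> Dext t \<Longrightarrow> x \<in> Xs t \<Longrightarrow> f t y x \<noteq> \<infinity>"
    and X_nonempty: "y \<in> Dext t \<Longrightarrow> X t y \<noteq> {}"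
proof -
  have "\<exists>e. e > 0 \<and> (\<forall>y\<in>enlarge e (Xs (t - 1)). \<forall>x\<in>Xs t. f t y x \<noteq> \<infinity>) \<and>
    (\<forall>y\<in>enlarge e (Xs (t - 1)). \<exists>x\<in>Xs t. (\<forall>i. g t y x $ i \<le> 0) \<and> A t *v x + B t *v y = b t)"
    using H0d assms by auto
  from someI_ex[OF this, folded margin_def]
  show "margin t > 0"
    and "y \<in> Dext t \<Longrightarrow> x \<in> Xs t \<Longrightarrow> f t y x \<noteq> \<infinity>"
    and "y \<in> Dext t \<Longrightarrow> X t y \<noteq> {}"
    using assms unfolding Dext_def ex_in_conv[symmetric] mem_X_iff by fastforce+
qed

lemma convex_Dext: "convex (Dext t)"
  unfolding Dext_def using Xs_nonempty_convex_compact by (auto intro: convex_enlarge)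

lemma compact_Dext: "t \<le> T \<Longrightarrow> compact (Dext t)"
  unfolding Dext_def using Xs_nonempty_convex_compact by (auto intro: compact_enlarge)

lemma Xs_subset_Dext:
  assumes "1 \<le> t" "t \<le> Suc T"
  shows "Xs (t - 1) \<subseteq> Dext t"
proof (cases "t \<le> T")
  case True
  then show ?thesis
    unfolding Dext_def using subset_enlarge[OF less_imp_le[OF margin_pos[OF assms(1) True]]] by simp
qed (simp add: Dext_def)

lemma f_not_MInf: "1 \<le> t \<Longrightarrow> t \<le> T \<Longrightarrow> f t y x \<noteq> -\<infinity>"
  using H0b unfolding proper_fun_def by auto

lemma f_eq_fr: "1 \<le> t \<Longrightarrow> t \<le> T \<Longrightarrow> y \<in> Dext t \<Longrightarrow> x \<in> Xs t \<Longrightarrow> f t y x = ereal (fr t y x)"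
  unfolding fr_def using f_not_MInf f_not_PInf by (cases "f t y x") auto

lemma f_eq_fr_Xs:
  "1 \<le> t \<Longrightarrow> t \<le> T \<Longrightarrow> y \<in> Xs (t - 1) \<Longrightarrow> x \<in> Xs t \<Longrightarrow> f t y x = ereal (fr t y x)"
  using f_eq_fr Xs_subset_Dext[of t] by auto

lemma fr_bounded_below:
  assumes "1 \<le> t" "t \<le> T"
  obtains m where "\<And>y x. y \<in> Dext t \<Longrightarrow> x \<in> Xs t \<Longrightarrow> m \<le> fr t y x"
proof -
  obtain m where "\<forall>z\<in>Dext t \<times> Xs t. ereal m \<le> case_prod (f t) z"
    using assms H0b f_not_MInf compact_Dext Xs_nonempty_convex_compact
    by (auto intro: lsc_fun_bounded_below_on_compact[of "case_prod (f t)" "Dext t \<times> Xs t"]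
        intro!: compact_Times)
  then have "ereal m \<le> f t y x" if "y \<in> Dext t" "x \<in> Xs t" for y x
    using that by auto
  then show ?thesis using f_eq_fr[OF assms] by (intro that) simp
qed

lemma fr_convex:
  assumes "1 \<le> t" "t \<le> T" "y1 \<in> Dext t" "y2 \<in> Dext t" "x1 \<in> Xs t" "x2 \<in> Xs t" "0 \<le> u" "u \<le> 1"
  shows "fr t ((1 - u) *\<^sub>R y1 + u *\<^sub>R y2) ((1 - u) *\<^sub>R x1 + u *\<^sub>R x2) \<le> (1 - u) * fr t y1 x1 + u * fr t y2 x2"
proof -
  have "convex_fun (case_prod (f t))" using H0b assms by auto
  then have "case_prod (f t) ((1 - u) *\<^sub>R (y1, x1) + u *\<^sub>R (y2, x2))
      \<le> ereal ((1 - u) * fr t y1 x1 + u * fr t y2 x2)"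
    using assms f_eq_fr[OF assms(1,2)] by (intro convex_funD) auto
  moreover have "(1 - u) *\<^sub>R y1 + u *\<^sub>R y2 \<in> Dext t" using convex_Dext assms by (simp add: convexD)
  moreover have "(1 - u) *\<^sub>R x1 + u *\<^sub>R x2 \<in> Xs t"
    using Xs_nonempty_convex_compact assms by (simp add: convexD)
  ultimately show ?thesis using f_eq_fr[OF assms(1,2)] by simp
qed

lemma X_convex_combination:
  assumes "1 \<le> t" "t \<le> T" "x1 \<in> X t y1" "x2 \<in> X t y2" "0 \<le> u" "u \<le> 1"
  shows "(1 - u) *\<^sub>R x1 + u *\<^sub>R x2 \<in> X t ((1 - u) *\<^sub>R y1 + u *\<^sub>R y2)"
  unfolding mem_X_iff
proof (intro conjI allI)
  have "x1 \<in> Xs t" "x2 \<in> Xs t" "convex (Xs t)"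
    using Xs_nonempty_convex_compact[of t] assms X_subset[of t] by auto
  then show "(1 - u) *\<^sub>R x1 + u *\<^sub>R x2 \<in> Xs t" using assms(5,6) by (simp add: convexD)
  have "A t *v ((1 - u) *\<^sub>R x1 + u *\<^sub>R x2) + B t *v ((1 - u) *\<^sub>R y1 + u *\<^sub>R y2)
      = (1 - u) *\<^sub>R (A t *v x1 + B t *v y1) + u *\<^sub>R (A t *v x2 + B t *v y2)"
    by (simp add: algebra_simps)
  also have "\<dots> = b t" using assms(3,4) unfolding mem_X_iff by (simp flip: scaleR_left_distrib)
  finally show "A t *v ((1 - u) *\<^sub>R x1 + u *\<^sub>R x2) + B t *v ((1 - u) *\<^sub>R y1 + u *\<^sub>R y2) = b t" .
  fix i
  have "convex_on UNIV (\<lambda>(y, x). g t y x $ i)" using H0c assms by auto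
  then have "(\<lambda>(y, x). g t y x $ i) ((1 - u) *\<^sub>R (y1, x1) + u *\<^sub>R (y2, x2))
      \<le> (1 - u) * (\<lambda>(y, x). g t y x $ i) (y1, x1) + u * (\<lambda>(y, x). g t y x $ i) (y2, x2)"
    using assms by (intro convex_onD) auto
  moreover have "g t y1 x1 $ i \<le> 0" "g t y2 x2 $ i \<le> 0" using assms(3,4) mem_X_iff by auto
  ultimately show "g t ((1 - u) *\<^sub>R y1 + u *\<^sub>R y2) ((1 - u) *\<^sub>R x1 + u *\<^sub>R x2) $ i \<le> 0"
    using assms(5,6) by simp (smt (verit, best) mult_nonneg_nonpos)
qed

definition "regular_cost_to_go t \<longleftrightarrow>
    (\<forall>y\<in>Dext t. Q t y = ereal (qr t y)) \<and> (\<exists>m. \<forall>y\<in>Dext t. m \<le> qr t y) \<and> convex_on (Dext t) (qr t)"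

lemma regular_cost_to_go_Suc_T: "regular_cost_to_go (Suc T)"
  unfolding regular_cost_to_go_def Dext_def qr_def
  by (auto simp: Q_Suc_T convex_on_const zero_ereal_def intro!: exI[of _ "0::real"])

lemma Q_eq_INF_real:
  assumes "1 \<le> t" "t \<le> T" and "\<forall>x\<in>Xs t. Q (Suc t) x = ereal (qr (Suc t) x)" and "y \<in> Dext t"
  shows "Q t y = (INF x\<in>X t y. ereal (fr t y x + qr (Suc t) x))"
  unfolding Q_eq_INF[OF assms(1,2)]
proof (intro INF_cong refl)
  fix x assume "x \<in> X t y"
  then have "x \<in> Xs t" using X_subset by blast
  then show "f t y x + Q (Suc t) x = ereal (fr t y x + qr (Suc t) x)"
    using assms f_eq_fr[OF assms(1,2,4)] by simp
qed

lemma near_minimizer: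
  assumes "Q t y = (INF x\<in>X t y. ereal (h x))" and "Q t y = ereal a" and "0 < \<eta>"
  obtains x where "x \<in> X t y" "h x < a + \<eta>"
proof -
  have "(INF x\<in>X t y. ereal (h x)) = ereal a" using assms(1,2) by simp
  then have "(INF x\<in>X t y. ereal (h x)) < ereal (a + \<eta>)" using assms(3) by simp
  then show ?thesis using that unfolding INF_less_iff by auto
qed

lemma Q_finite_bounded_below_step:
  assumes t: "1 \<le> t" "t \<le> T" and reg: "regular_cost_to_go (Suc t)"
  obtains m where "\<And>y. y \<in> Dext t \<Longrightarrow> Q t y = ereal (qr t y) \<and> m \<le> qr t y"
proof -
  have XsD: "Xs t \<subseteq> Dext (Suc t)" using Xs_subset_Dext[of "Suc t"] t by simp
  obtain m' where m': "\<And>y. y \<in> Dext (Suc t) \<Longrightarrow> m' \<le> qr (Suc t) y"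
    using reg unfolding regular_cost_to_go_def by blast
  obtain mf where mf: "\<And>y x. y \<in> Dext t \<Longrightarrow> x \<in> Xs t \<Longrightarrow> mf \<le> fr t y x"
    using fr_bounded_below[OF t] by blast
  have Qrep: "Q t y = (INF x\<in>X t y. ereal (fr t y x + qr (Suc t) x))" if "y \<in> Dext t" for y
    using reg XsD that unfolding regular_cost_to_go_def by (intro Q_eq_INF_real[OF t]) blast+
  have "Q t y = ereal (qr t y) \<and> mf + m' \<le> qr t y" if y: "y \<in> Dext t" for y
  proof -
    obtain x where "x \<in> X t y" using X_nonempty[OF t y] by blast
    then have up: "Q t y \<le> ereal (fr t y x + qr (Suc t) x)"
      unfolding Qrep[OF y] by (rule INF_lower)
    have lo: "ereal (mf + m') \<le> Q t y" unfolding Qrep[OF y]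
    proof (rule INF_greatest)
      fix x' assume "x' \<in> X t y"
      then have "x' \<in> Xs t" using X_subset by auto
      then show "ereal (mf + m') \<le> ereal (fr t y x' + qr (Suc t) x')"
        using mf[OF y] m' XsD by (simp add: add_mono subsetD)
    qed
    have "Q t y = ereal (qr t y)" unfolding qr_def using up lo by (cases "Q t y") auto
    then show ?thesis using lo by simp
  qed
  then show ?thesis by (rule that)
qed

lemma qr_convex_step:
  assumes t: "1 \<le> t" "t \<le> T" and reg: "regular_cost_to_go (Suc t)"
    and fin: "\<forall>y\<in>Dext t. Q t y = ereal (qr t y)"
  shows "convex_on (Dext t) (qr t)"
proof -
  have XsD: "Xs t \<subseteq> Dext (Suc t)" using Xs_subset_Dext[of "Suc t"] t by simp
  have cq: "convex_on (Dext (Suc t)) (qr (Suc t))" using reg unfolding regular_cost_to_go_def by blast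
  have Qrep: "Q t y = (INF x\<in>X t y. ereal (fr t y x + qr (Suc t) x))" if "y \<in> Dext t" for y
    using reg XsD that unfolding regular_cost_to_go_def by (intro Q_eq_INF_real[OF t]) blast+
  show ?thesis
  proof (rule convex_onI)
  fix u :: real and y1 y2 assume u: "0 < u" "u < 1" and y: "y1 \<in> Dext t" "y2 \<in> Dext t"
  define yu where "yu = (1 - u) *\<^sub>R y1 + u *\<^sub>R y2"
  have yuD: "yu \<in> Dext t" unfolding yu_def using convex_Dext y u by (simp add: convexD)
  show "qr t yu \<le> (1 - u) * qr t y1 + u * qr t y2"
  proof (rule field_le_epsilon)
    fix \<eta> :: real assume eta: "0 < \<eta>"
    obtain x1 where x1: "x1 \<in> X t y1" "fr t y1 x1 + qr (Suc t) x1 < qr t y1 + \<eta>"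
      using near_minimizer[OF Qrep[OF y(1)] _ eta] fin y by blast
    obtain x2 where x2: "x2 \<in> X t y2" "fr t y2 x2 + qr (Suc t) x2 < qr t y2 + \<eta>"
      using near_minimizer[OF Qrep[OF y(2)] _ eta] fin y by blast
    define z where "z = (1 - u) *\<^sub>R x1 + u *\<^sub>R x2"
    have x12: "x1 \<in> Xs t" "x2 \<in> Xs t" using x1 x2 X_subset by auto
    have zX: "z \<in> X t yu"
      unfolding z_def yu_def using t x1 x2 u by (intro X_convex_combination) auto
    have "Q t yu \<le> ereal (fr t yu z + qr (Suc t) z)" unfolding Qrep[OF yuD] using zX by (rule INF_lower)
    then have "qr t yu \<le> fr t yu z + qr (Suc t) z" using fin yuD by simp
    also have "fr t yu z \<le> (1 - u) * fr t y1 x1 + u * fr t y2 x2"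
      unfolding yu_def z_def using u y x12 by (intro fr_convex[OF t]) auto
    also have "qr (Suc t) z \<le> (1 - u) * qr (Suc t) x1 + u * qr (Suc t) x2"
      unfolding z_def using u x12 XsD by (intro convex_onD[OF cq]) auto
    finally have "qr t yu \<le> (1 - u) * (fr t y1 x1 + qr (Suc t) x1) + u * (fr t y2 x2 + qr (Suc t) x2)"
      by (simp add: algebra_simps)
    also have "\<dots> \<le> (1 - u) * (qr t y1 + \<eta>) + u * (qr t y2 + \<eta>)"
      using x1 x2 u by (intro add_mono[OF mult_left_mono mult_left_mono]) auto
    finally show "qr t yu \<le> (1 - u) * qr t y1 + u * qr t y2 + \<eta>"
      by (simp add: algebra_simps)
  qed
  qed (rule convex_Dext)
qed

lemma regular_cost_to_go:
  assumes "1 \<le> t" "t \<le> Suc T"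
  shows "regular_cost_to_go t"
proof (rule inc_induct[of t "Suc T" regular_cost_to_go])
  show "t \<le> Suc T" by fact
  show "regular_cost_to_go (Suc T)" by (rule regular_cost_to_go_Suc_T)
  fix n assume n: "t \<le> n" "n < Suc T" and reg: "regular_cost_to_go (Suc n)"
  have n1: "1 \<le> n" "n \<le> T" using n assms by auto
  obtain m where m: "\<And>y. y \<in> Dext n \<Longrightarrow> Q n y = ereal (qr n y) \<and> m \<le> qr n y"
    using Q_finite_bounded_below_step[OF n1 reg] by blast
  then have "convex_on (Dext n) (qr n)" by (intro qr_convex_step[OF n1 reg]) blast
  then show "regular_cost_to_go n" using m unfolding regular_cost_to_go_def by blast
qed

lemma Q_eq_qr: "1 \<le> t \<Longrightarrow> t \<le> Suc T \<Longrightarrow> y \<in> Dext t \<Longrightarrow> Q t y = ereal (qr t y)"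
  using regular_cost_to_go unfolding regular_cost_to_go_def by blast

lemma Q_eq_qr_Xs: "1 \<le> t \<Longrightarrow> t \<le> Suc T \<Longrightarrow> y \<in> Xs (t - 1) \<Longrightarrow> Q t y = ereal (qr t y)"
  using Q_eq_qr Xs_subset_Dext by blast

lemma Q_eq_INF_qr:
  assumes "1 \<le> t" "t \<le> T" "y \<in> Dext t"
  shows "Q t y = (INF x\<in>X t y. ereal (fr t y x + qr (Suc t) x))"
  using assms Q_eq_qr_Xs[of "Suc t"] by (intro Q_eq_INF_real) auto

lemma qr_bounded_above_uniformly_continuous:
  assumes t: "1 \<le> t" "t \<le> T"
  obtains M where "\<forall>y\<in>enlarge (margin t / 2) (Xs (t - 1)). qr t y \<le> M"
    and "uniformly_continuous_on (Xs (t - 1)) (qr t)"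
    and "enlarge (margin t / 2) (Xs (t - 1)) \<subseteq> Dext t"
proof -
  define K where "K = enlarge (margin t / 2) (Xs (t - 1))"
  have ep0: "margin t > 0" using margin_pos[OF t] .
  have cX: "convex (Xs (t - 1))" "compact (Xs (t - 1))" using Xs_nonempty_convex_compact t by auto
  have KD: "K \<subseteq> Dext t" unfolding K_def Dext_def using t ep0 by (simp add: enlarge_mono)
  have "convex_on (enlarge (margin t) (Xs (t - 1))) (qr t)"
    using regular_cost_to_go[of t] t unfolding regular_cost_to_go_def Dext_def by auto
  then have contK: "continuous_on K (qr t)"
    unfolding K_def using ep0 cX by (intro continuous_on_enlarge_if_convex_on) auto
  have "compact K" unfolding K_def using cX by (intro compact_enlarge)
  then have "bounded (qr t ` K)" by (intro compact_imp_bounded compact_continuous_image[OF contK])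
  then obtain M where "\<forall>y\<in>K. qr t y \<le> M" unfolding bounded_real by (auto dest: abs_le_D1)
  moreover have "Xs (t - 1) \<subseteq> K" unfolding K_def using ep0 by (intro subset_enlarge) simp
  then have "uniformly_continuous_on (Xs (t - 1)) (qr t)"
    using contK cX by (intro compact_uniformly_continuous) (auto intro: continuous_on_subset)
  ultimately show ?thesis using that KD unfolding K_def by blast
qed

lemma subgrad_beta: "1 \<le> k \<Longrightarrow> t \<in> {2..T} \<Longrightarrow> is_subgrad (Qlow f X (Qk k) t) (xk k (t - 1)) (beta k t)"
  using bwd by blast

lemma Qk_eq_max_cut:
  "1 \<le> k \<Longrightarrow> t \<in> {2..T} \<Longrightarrow> y \<in> Xs (t - 1) \<Longrightarrow> Qk k t y = max (Qk (k - 1) t y)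
     (Qlow f X (Qk k) t (xk k (t - 1)) + ereal (beta k t \<bullet> (y - xk k (t - 1))))"
  using bwd by blast

lemma xk_in_X: "1 \<le> k \<Longrightarrow> t \<in> {1..T} \<Longrightarrow> xk k t \<in> X t (xk k (t - 1))"
  using fwd by blast

lemma xk_minimizes_Fbar:
  "1 \<le> k \<Longrightarrow> t \<in> {1..T} \<Longrightarrow> z \<in> X t (xk k (t - 1)) \<Longrightarrow>
    Fbar f (Qk (k - 1)) (lam t k) t (xk k (t - 1)) (xk k t) (xP t k)
    \<le> Fbar f (Qk (k - 1)) (lam t k) t (xk k (t - 1)) z (xP t k)"
  using fwd by blast

lemma xk_in_Xs: "1 \<le> k \<Longrightarrow> t \<le> T \<Longrightarrow> xk k t \<in> Xs t"
  using fwd0 X0 xk_in_X[of k t] by (cases "t = 0") (auto intro: subsetD[OF X_subset])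

lemma Qlow_le_Q_if:
  assumes "1 \<le> t" "t \<le> T" "\<forall>x\<in>Xs t. Qk k (Suc t) x \<le> Q (Suc t) x"
  shows "Qlow f X (Qk k) t y \<le> Q t y"
  unfolding Qlow_def Q_eq_INF[OF assms(1,2)]
proof (rule INF_mono)
  fix x assume x: "x \<in> X t y"
  then have "x \<in> Xs t" using X_subset by blast
  then show "\<exists>x'\<in>X t y. f t y x' + Qk k (t + 1) x' \<le> f t y x + Q (Suc t) x"
    using x assms(3) by (intro bexI[of _ x]) (auto intro!: add_left_mono)
qed

lemma Qk_le_Q_step:
  assumes k: "1 \<le> k" and t: "t \<in> {2..T}"
    and prev: "\<forall>y\<in>Xs (t - 1). Qk (k - 1) t y \<le> Q t y"
    and next_stage: "\<forall>x\<in>Xs t. Qk k (Suc t) x \<le> Q (Suc t) x"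
    and y: "y \<in> Xs (t - 1)"
  shows "Qk k t y \<le> Q t y"
proof -
  have "Qlow f X (Qk k) t (xk k (t - 1)) + ereal (beta k t \<bullet> (y - xk k (t - 1)))
      \<le> Qlow f X (Qk k) t y"
    using subgrad_beta[OF k t] unfolding is_subgrad_def by blast
  also have "\<dots> \<le> Q t y" using next_stage t by (intro Qlow_le_Q_if) auto
  finally show ?thesis using Qk_eq_max_cut[OF k t y] prev y by simp
qed

lemma Qk_le_Q: "t \<in> {2..Suc T} \<Longrightarrow> y \<in> Xs (t - 1) \<Longrightarrow> Qk k t y \<le> Q t y"
proof (induction k arbitrary: t y)
  case 0
  then show ?case using init QT1 Q_Suc_T by (cases "t = Suc T") auto
next
  case (Suc k)
  have "\<forall>y\<in>Xs (t - 1). Qk (Suc k) t y \<le> Q t y"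
  proof (rule inc_induct[of t "Suc T"])
    show "t \<le> Suc T" using Suc.prems by simp
    show "\<forall>y\<in>Xs (Suc T - 1). Qk (Suc k) (Suc T) y \<le> Q (Suc T) y" using QT1 Q_Suc_T by simp
    fix n assume "t \<le> n" "n < Suc T" and nxt: "\<forall>y\<in>Xs (Suc n - 1). Qk (Suc k) (Suc n) y \<le> Q (Suc n) y"
    then have n: "n \<in> {2..T}" using Suc.prems by auto
    then have "\<forall>y\<in>Xs (n - 1). Qk (Suc k - 1) n y \<le> Q n y" using Suc.IH by simp
    then show "\<forall>y\<in>Xs (n - 1). Qk (Suc k) n y \<le> Q n y"
      using Qk_le_Q_step[OF _ n] nxt by simp
  qed
  then show ?case using Suc.prems by blast
qed

lemma Qlow_le_Q: "1 \<le> t \<Longrightarrow> t \<le> T \<Longrightarrow> Qlow f X (Qk k) t y \<le> Q t y"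
  using Qk_le_Q[of "Suc t"] by (intro Qlow_le_Q_if) auto

lemma Qk_mono:
  assumes "j \<le> k" "1 \<le> j" "t \<in> {2..Suc T}" "y \<in> Xs (t - 1)"
  shows "Qk j t y \<le> Qk k t y"
  using assms(1)
proof (induction k rule: dec_induct)
  case (step m)
  have "Qk m t y \<le> Qk (Suc m) t y"
    using Qk_eq_max_cut[of "Suc m" t y] QT1 assms by (cases "t = Suc T") auto
  then show ?case using step.IH by simp
qed simp

definition "cutval k t = real_of_ereal (Qlow f X (Qk k) t (xk k (t - 1)))"

lemma Qlow_trial_eq_cutval:
  "1 \<le> k \<Longrightarrow> t \<in> {2..T} \<Longrightarrow> Qlow f X (Qk k) t (xk k (t - 1)) = ereal (cutval k t)"
  using subgrad_beta[of k t] unfolding is_subgrad_def cutval_def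
  by (cases "Qlow f X (Qk k) t (xk k (t - 1))") auto

lemma cut_le_Qk:
  assumes "1 \<le> k" "t \<in> {2..T}" "y \<in> Xs (t - 1)"
  shows "cutval k t + beta k t \<bullet> (y - xk k (t - 1)) \<le> Qk k t y"
  using Qk_eq_max_cut[OF assms] Qlow_trial_eq_cutval[OF assms(1,2)] by simp

definition "qm k t y = real_of_ereal (Qk k t y)"

lemma Qk_eq_qm:
  assumes "1 \<le> k" "t \<in> {2..Suc T}" "y \<in> Xs (t - 1)"
  shows "Qk k t y = ereal (qm k t y)" and "qm k t y \<le> qr t y"
proof -
  have up: "Qk k t y \<le> ereal (qr t y)" using Qk_le_Q[OF assms(2,3)] Q_eq_qr_Xs[of t y] assms by simp
  moreover have "Qk k t y \<noteq> -\<infinity>"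
  proof (cases "t = Suc T")
    case False
    then have "t \<in> {2..T}" using assms by auto
    then show ?thesis using cut_le_Qk[OF assms(1) _ assms(3)] by auto
  qed (use QT1 in simp)
  ultimately show "Qk k t y = ereal (qm k t y)" unfolding qm_def by (cases "Qk k t y") auto
  then show "qm k t y \<le> qr t y" using up by simp
qed

lemma Qk_uniformly_bounded_below:
  assumes s: "s \<in> {2..Suc T}"
  obtains m where "\<And>k x. 1 \<le> k \<Longrightarrow> x \<in> Xs (s - 1) \<Longrightarrow> m \<le> qm k s x"
proof (cases "s = Suc T")
  case True
  then show ?thesis using that[of 0] QT1 by (simp add: qm_def)
next
  case False
  then have s': "s \<in> {2..T}" using s by auto
  define x1 where "x1 = xk 1 (s - 1)"
  define d where "d = diameter (Xs (s - 1))"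
  have x1: "x1 \<in> Xs (s - 1)" unfolding x1_def using xk_in_Xs[of 1 "s - 1"] s' by auto
  have "compact (Xs (s - 1))" using Xs_nonempty_convex_compact[of "s - 1"] s' by auto
  then have bX: "bounded (Xs (s - 1))" by (rule compact_imp_bounded)
  show ?thesis
  proof (rule that[of "cutval 1 s - norm (beta 1 s) * d"])
    fix k :: nat and x assume k: "1 \<le> k" and x: "x \<in> Xs (s - 1)"
    have "\<bar>beta 1 s \<bullet> (x - x1)\<bar> \<le> norm (beta 1 s) * norm (x - x1)" by (rule Cauchy_Schwarz_ineq2)
    also have "\<dots> \<le> norm (beta 1 s) * d"
      unfolding d_def using diameter_bounded_bound[OF bX x x1] by (intro mult_left_mono) (auto simp: dist_norm)
    finally have "cutval 1 s - norm (beta 1 s) * d \<le> cutval 1 s + beta 1 s \<bullet> (x - x1)" by linarith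
    also have "ereal \<dots> \<le> Qk 1 s x" using cut_le_Qk[of 1 s x] s' x unfolding x1_def by simp
    also have "\<dots> \<le> Qk k s x" using Qk_mono[of 1 k s x] k s x by simp
    finally show "cutval 1 s - norm (beta 1 s) * d \<le> qm k s x" using Qk_eq_qm[OF k s x] by simp
  qed
qed

lemma Qlow_uniformly_bounded_below:
  assumes t: "1 \<le> t" "t \<le> T"
  obtains m where "\<And>k y. 1 \<le> k \<Longrightarrow> y \<in> Dext t \<Longrightarrow> ereal m \<le> Qlow f X (Qk k) t y"
proof -
  obtain m where m: "\<And>k x. 1 \<le> k \<Longrightarrow> x \<in> Xs t \<Longrightarrow> m \<le> qm k (Suc t) x"
    using Qk_uniformly_bounded_below[of "Suc t"] t by auto
  obtain mf where mf: "\<And>y x. y \<in> Dext t \<Longrightarrow> x \<in> Xs t \<Longrightarrow> mf \<le> fr t y x"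
    using fr_bounded_below[OF t] by blast
  have "ereal (mf + m) \<le> Qlow f X (Qk k) t y" if k: "1 \<le> k" and y: "y \<in> Dext t" for k y
    unfolding Qlow_def
  proof (rule INF_greatest)
    fix x assume "x \<in> X t y"
    then have x: "x \<in> Xs t" using X_subset by blast
    then show "ereal (mf + m) \<le> f t y x + Qk k (t + 1) x"
      using mf[OF y x] m[OF k x] f_eq_fr[OF t y x] Qk_eq_qm(1)[OF k, of "Suc t" x] t by simp
  qed
  then show ?thesis using that by blast
qed

text \<open>The cut at \<open>x\<^sub>t\<^sub>-\<^sub>1\<^sup>k\<close> minorizes \<open>Q\<^sub>t\<close>, which is bounded above on a ball of radius \<open>\<epsilon>/2\<close>
  around it, while its value there is bounded below uniformly in \<open>k\<close>.\<close>
lemma beta_bounded: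
  assumes t: "t \<in> {2..T}"
  obtains L where "\<And>k. 1 \<le> k \<Longrightarrow> norm (beta k t) \<le> L"
proof -
  have t1: "1 \<le> t" "t \<le> T" using t by auto
  obtain M where M: "\<forall>y\<in>enlarge (margin t / 2) (Xs (t - 1)). qr t y \<le> M"
    and KD: "enlarge (margin t / 2) (Xs (t - 1)) \<subseteq> Dext t"
    using qr_bounded_above_uniformly_continuous[OF t1] by blast
  obtain m where m: "\<And>k y. 1 \<le> k \<Longrightarrow> y \<in> Dext t \<Longrightarrow> ereal m \<le> Qlow f X (Qk k) t y"
    using Qlow_uniformly_bounded_below[OF t1] by blast
  define \<delta> where "\<delta> = margin t / 2"
  have d0: "\<delta> > 0" unfolding \<delta>_def using margin_pos[OF t1] by simp
  show ?thesis
  proof (rule that)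
    fix k :: nat assume k: "1 \<le> k"
    define x where "x = xk k (t - 1)"
    have x: "x \<in> Xs (t - 1)" unfolding x_def using xk_in_Xs[OF k, of "t - 1"] t by auto
    have "cutval k t + beta k t \<bullet> (y - x) \<le> M" if "norm (y - x) \<le> \<delta>" for y
    proof -
      have yK: "y \<in> enlarge (margin t / 2) (Xs (t - 1))"
        using add_in_enlarge[OF x that] unfolding \<delta>_def by simp
      have "ereal (cutval k t + beta k t \<bullet> (y - x)) \<le> Qlow f X (Qk k) t y"
        using subgrad_beta[OF k t] Qlow_trial_eq_cutval[OF k t] unfolding is_subgrad_def x_def by auto
      also have "\<dots> \<le> Q t y" by (rule Qlow_le_Q[OF t1])
      also have "\<dots> = ereal (qr t y)" using Q_eq_qr[of t y] t1 yK KD by auto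
      finally show ?thesis using M yK by fastforce
    qed
    then have "cutval k t + \<delta> * norm (beta k t) \<le> M"
      using d0 by (intro affine_minorant_slope_bound) auto
    moreover have "m \<le> cutval k t"
      using m[OF k, of x] x Xs_subset_Dext[of t] t1 Qlow_trial_eq_cutval[OF k t] unfolding x_def by auto
    ultimately show "norm (beta k t) \<le> (M - m) / \<delta>" using d0 by (simp add: field_simps)
  qed
qed

definition "model_gap t k = qr t (xk k (t - 1)) - qm (k - 1) t (xk k (t - 1))"

lemma model_gap_tendsto_zero_if_cuts_exact:
  assumes t: "t \<in> {2..T}" and exact: "(\<lambda>k. qr t (xk k (t - 1)) - cutval k t) \<longlonglongrightarrow> 0"
  shows "model_gap t \<longlonglongrightarrow> 0"
proof -
  have t1: "1 \<le> t" "t \<le> T" using t by auto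
  obtain L where L: "\<And>k. 1 \<le> k \<Longrightarrow> norm (beta k t) \<le> L" using beta_bounded[OF t] by blast
  have x: "xk k (t - 1) \<in> Xs (t - 1)" if "1 \<le> k" for k using xk_in_Xs[OF that, of "t - 1"] t by auto
  have K: "compact (Xs (t - 1))" using Xs_nonempty_convex_compact[of "t - 1"] t by auto
  have uc: "uniformly_continuous_on (Xs (t - 1)) (qr t)"
    using qr_bounded_above_uniformly_continuous[OF t1] by blast
  have cut: "cutval j t + beta j t \<bullet> (xk k (t - 1) - xk j (t - 1)) \<le> qm (k - 1) t (xk k (t - 1))"
    if "1 \<le> j" "j < k" for j k
  proof -
    have "ereal (cutval j t + beta j t \<bullet> (xk k (t - 1) - xk j (t - 1))) \<le> Qk j t (xk k (t - 1))"
      using cut_le_Qk[OF that(1) t x] that by simp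
    also have "\<dots> \<le> Qk (k - 1) t (xk k (t - 1))" using Qk_mono that t x by simp
    finally show ?thesis using Qk_eq_qm(1)[of "k - 1" t "xk k (t - 1)"] that t x by simp
  qed
  have valid: "qm (k - 1) t (xk k (t - 1)) \<le> qr t (xk k (t - 1))" if "1 < k" for k
    using Qk_eq_qm(2)[of "k - 1" t] that t x by simp
  show ?thesis
    unfolding model_gap_def using K x uc L exact cut valid
    by (rule cut_gap_tendsto_zero[where N = 1 and c = "\<lambda>k. cutval k t" and \<beta> = "\<lambda>k. beta k t"])
qed

lemma lam_tendsto_zero: "t \<in> {1..T} \<Longrightarrow> (\<lambda>k. lam t k) \<longlonglongrightarrow> 0"
proof (cases "t = T")
  case True
  have "eventually (\<lambda>k. lam t k = 0) sequentially"
    unfolding eventually_sequentially using lam_T True by blast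
  then show ?thesis by (rule tendsto_eventually)
qed (use lam_lim in auto)

definition "penalty t k z = lam t k * (norm (z - xP t k))\<^sup>2"

definition "Fr k t z = fr t (xk k (t - 1)) z + qm (k - 1) (Suc t) z + penalty t k z"

lemma penalty_bounds:
  assumes "1 \<le> k" "t \<in> {1..T}" "z \<in> Xs t"
  shows "0 \<le> penalty t k z" "penalty t k z \<le> lam t k * (diameter (Xs t))\<^sup>2"
proof -
  have lam: "0 \<le> lam t k" using lam_nonneg assms by auto
  have "compact (Xs t)" using Xs_nonempty_convex_compact[of t] assms by auto
  moreover have "xP t k \<in> Xs t" using xP_in assms by auto
  ultimately have "norm (z - xP t k) \<le> diameter (Xs t)"
    using diameter_bounded_bound[OF compact_imp_bounded assms(3)] by (simp add: dist_norm)
  then show "penalty t k z \<le> lam t k * (diameter (Xs t))\<^sup>2"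
    unfolding penalty_def using lam by (intro mult_left_mono power_mono) auto
  show "0 \<le> penalty t k z" unfolding penalty_def using lam by simp
qed

text \<open>From \<open>k = 2\<close> on, the model \<open>Q\<^sup>k\<^sup>-\<^sup>1\<close> in the forward pass comes from a backward pass and is
  finite; the initial model \<open>Q\<^sup>0\<close> may be \<open>-\<infinity>\<close>.\<close>
lemma Fbar_eq_Fr:
  assumes k: "2 \<le> k" and t: "t \<in> {1..T}" and z: "z \<in> Xs t"
  shows "Fbar f (Qk (k - 1)) (lam t k) t (xk k (t - 1)) z (xP t k) = ereal (Fr k t z)"
proof -
  have "xk k (t - 1) \<in> Dext t" using xk_in_Xs[of k "t - 1"] Xs_subset_Dext[of t] k t by auto
  then show ?thesis
    unfolding Fbar_def Fr_def penalty_def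
    using f_eq_fr Qk_eq_qm(1)[of "k - 1" "Suc t" z] k t z by simp
qed

lemma Fr_trial_le:
  assumes k: "2 \<le> k" and t: "t \<in> {1..T}" and z: "z \<in> X t (xk k (t - 1))"
  shows "Fr k t (xk k t) \<le> Fr k t z"
proof -
  have "xk k t \<in> Xs t" "z \<in> Xs t" using xk_in_Xs[of k t] z X_subset k t by auto
  moreover have "Fbar f (Qk (k - 1)) (lam t k) t (xk k (t - 1)) (xk k t) (xP t k)
      \<le> Fbar f (Qk (k - 1)) (lam t k) t (xk k (t - 1)) z (xP t k)"
    using xk_minimizes_Fbar[OF _ t z] k by simp
  ultimately show ?thesis using Fbar_eq_Fr[OF k t] by simp
qed

lemma Fr_trial_le_qr:
  assumes k: "2 \<le> k" and t: "t \<in> {1..T}"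
  shows "Fr k t (xk k t) \<le> qr t (xk k (t - 1)) + lam t k * (diameter (Xs t))\<^sup>2"
proof (rule field_le_epsilon)
  fix \<eta> :: real assume eta: "0 < \<eta>"
  define y where "y = xk k (t - 1)"
  have t1: "1 \<le> t" "t \<le> T" using t by auto
  have yD: "y \<in> Dext t" unfolding y_def using xk_in_Xs[of k "t - 1"] Xs_subset_Dext[of t] k t by auto
  obtain z where z: "z \<in> X t y" "fr t y z + qr (Suc t) z < qr t y + \<eta>"
    using near_minimizer[OF Q_eq_INF_qr[OF t1 yD] Q_eq_qr[OF t1(1) _ yD] eta] t by auto
  have zX: "z \<in> Xs t" using z X_subset by blast
  have "Fr k t (xk k t) \<le> Fr k t z" using Fr_trial_le[OF k t] z unfolding y_def by blast
  also have "\<dots> \<le> fr t y z + qr (Suc t) z + lam t k * (diameter (Xs t))\<^sup>2"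
    unfolding Fr_def y_def using Qk_eq_qm(2)[of "k - 1" "Suc t" z] penalty_bounds[of k t z] zX k t
    by (simp add: add_mono)
  finally show "Fr k t (xk k t) \<le> qr t (xk k (t - 1)) + lam t k * (diameter (Xs t))\<^sup>2 + \<eta>"
    using z(2) unfolding y_def by linarith
qed

lemma Qlow_trial_ge:
  assumes k: "2 \<le> k" and t: "t \<in> {1..T}"
  shows "ereal (Fr k t (xk k t) - lam t k * (diameter (Xs t))\<^sup>2) \<le> Qlow f X (Qk k) t (xk k (t - 1))"
  unfolding Qlow_def
proof (rule INF_greatest)
  fix z assume z: "z \<in> X t (xk k (t - 1))"
  have zX: "z \<in> Xs t" using z X_subset by blast
  have t1: "1 \<le> t" "t \<le> T" using t by auto
  have yD: "xk k (t - 1) \<in> Dext t" using xk_in_Xs[of k "t - 1"] Xs_subset_Dext[of t] k t by auto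
  have "Fr k t (xk k t) - lam t k * (diameter (Xs t))\<^sup>2 \<le> Fr k t z - penalty t k z"
    using Fr_trial_le[OF k t z] penalty_bounds[of k t z] zX k t by simp
  also have "\<dots> = fr t (xk k (t - 1)) z + qm (k - 1) (Suc t) z" unfolding Fr_def by simp
  also have "ereal \<dots> \<le> f t (xk k (t - 1)) z + Qk k (Suc t) z"
  proof -
    have k1: "1 \<le> k - 1" using k by simp
    have "ereal (qm (k - 1) (Suc t) z) \<le> Qk k (Suc t) z"
      using Qk_eq_qm(1)[OF k1, of "Suc t" z] Qk_mono[of "k - 1" k "Suc t" z] k1 t zX by simp
    then show ?thesis unfolding f_eq_fr[OF t1 yD zX] plus_ereal.simps(1)[symmetric] by (rule add_left_mono)
  qed
  finally show "ereal (Fr k t (xk k t) - lam t k * (diameter (Xs t))\<^sup>2) \<le> f t (xk k (t - 1)) z + Qk k (t + 1) z"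
    by simp
qed

text \<open>\<open>Q\<^sub>t(x\<^sub>t\<^sub>-\<^sub>1\<^sup>k)\<close>, the cut value and the true cost-to-go of \<open>x\<^sub>t\<^sup>k\<close> are all squeezed against the
  forward-pass value, up to the model gap at stage \<open>t + 1\<close> and the penalty bound.\<close>
lemma stage_gap_bounds:
  assumes k: "2 \<le> k" and t: "t \<in> {1..T}"
  defines "y \<equiv> xk k (t - 1)" and "r \<equiv> model_gap (Suc t) k + lam t k * (diameter (Xs t))\<^sup>2"
  shows "Qlow f X (Qk k) t y = ereal (real_of_ereal (Qlow f X (Qk k) t y))"
    and "\<bar>qr t y - real_of_ereal (Qlow f X (Qk k) t y)\<bar> \<le> r"
    and "\<bar>Fr k t (xk k t) - qr t y\<bar> \<le> r"
    and "\<bar>fr t y (xk k t) + qr (Suc t) (xk k t) - qr t y\<bar> \<le> r"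
proof -
  have t1: "1 \<le> t" "t \<le> T" using t by auto
  have k1: "1 \<le> k - 1" using k by simp
  have yD: "y \<in> Dext t" unfolding y_def using xk_in_Xs[of k "t - 1"] Xs_subset_Dext[of t] k t by auto
  have xt: "xk k t \<in> X t y" "xk k t \<in> Xs t" unfolding y_def using xk_in_X xk_in_Xs k t by auto
  have "Q t y \<le> ereal (fr t y (xk k t) + qr (Suc t) (xk k t))"
    unfolding Q_eq_INF_qr[OF t1 yD] using xt(1) by (rule INF_lower)
  then have opt: "qr t y \<le> fr t y (xk k t) + qr (Suc t) (xk k t)" using Q_eq_qr[OF t1(1) _ yD] t by simp
  have gap: "model_gap (Suc t) k = qr (Suc t) (xk k t) - qm (k - 1) (Suc t) (xk k t)"
    unfolding model_gap_def by simp
  have e0: "0 \<le> model_gap (Suc t) k" unfolding gap using Qk_eq_qm(2)[OF k1, of "Suc t"] xt t by simp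
  have pen: "0 \<le> penalty t k (xk k t)" "0 \<le> lam t k * (diameter (Xs t))\<^sup>2"
    using penalty_bounds[of k t] xt k t by (auto intro: order_trans)
  have up: "Fr k t (xk k t) \<le> qr t y + lam t k * (diameter (Xs t))\<^sup>2"
    unfolding y_def by (rule Fr_trial_le_qr[OF k t])
  have Qlow: "ereal (Fr k t (xk k t) - lam t k * (diameter (Xs t))\<^sup>2) \<le> Qlow f X (Qk k) t y"
    "Qlow f X (Qk k) t y \<le> ereal (qr t y)"
    using Qlow_trial_ge[OF k t] Qlow_le_Q[OF t1, of k y] Q_eq_qr[OF t1(1) _ yD] t
    by (simp_all add: y_def)
  then obtain l where l: "Qlow f X (Qk k) t y = ereal l"
    by (cases "Qlow f X (Qk k) t y") auto
  then show "Qlow f X (Qk k) t y = ereal (real_of_ereal (Qlow f X (Qk k) t y))" by simp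
  have lo: "Fr k t (xk k t) - lam t k * (diameter (Xs t))\<^sup>2 \<le> l" "l \<le> qr t y"
    using Qlow unfolding l by simp_all
  show "\<bar>qr t y - real_of_ereal (Qlow f X (Qk k) t y)\<bar> \<le> r"
    and "\<bar>Fr k t (xk k t) - qr t y\<bar> \<le> r"
    and "\<bar>fr t y (xk k t) + qr (Suc t) (xk k t) - qr t y\<bar> \<le> r"
    using opt gap e0 pen up lo unfolding l real_of_ereal.simps r_def abs_le_iff Fr_def
    by (simp_all only: y_def) (intro conjI; linarith)+
qed

lemma stage_residuals_tendsto_zero:
  assumes t: "t \<in> {1..T}" and next_stage: "model_gap (Suc t) \<longlonglongrightarrow> 0"
  shows "(\<lambda>k. qr t (xk k (t - 1)) - real_of_ereal (Qlow f X (Qk k) t (xk k (t - 1)))) \<longlonglongrightarrow> 0"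
    and "(\<lambda>k. Fr k t (xk k t) - qr t (xk k (t - 1))) \<longlonglongrightarrow> 0"
    and "(\<lambda>k. fr t (xk k (t - 1)) (xk k t) + qr (Suc t) (xk k t) - qr t (xk k (t - 1))) \<longlonglongrightarrow> 0"
proof -
  define r where "r k = model_gap (Suc t) k + lam t k * (diameter (Xs t))\<^sup>2" for k
  have "r \<longlonglongrightarrow> 0 + 0 * (diameter (Xs t))\<^sup>2"
    unfolding r_def using lam_tendsto_zero[OF t] next_stage by (intro tendsto_intros)
  then have r: "r \<longlonglongrightarrow> 0" by simp
  have ev: "eventually (\<lambda>k. 2 \<le> k) sequentially" by (rule eventually_ge_at_top)
  show "(\<lambda>k. qr t (xk k (t - 1)) - real_of_ereal (Qlow f X (Qk k) t (xk k (t - 1)))) \<longlonglongrightarrow> 0"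
    "(\<lambda>k. Fr k t (xk k t) - qr t (xk k (t - 1))) \<longlonglongrightarrow> 0"
    "(\<lambda>k. fr t (xk k (t - 1)) (xk k t) + qr (Suc t) (xk k t) - qr t (xk k (t - 1))) \<longlonglongrightarrow> 0"
    using stage_gap_bounds[OF _ t] unfolding r_def[symmetric]
    by (auto intro!: Lim_null_comparison[OF eventually_mono[OF ev] r])
qed

lemma model_gap_tendsto_zero:
  assumes "t \<in> {2..Suc T}"
  shows "model_gap t \<longlonglongrightarrow> 0"
proof (rule inc_induct[of t "Suc T"])
  show "t \<le> Suc T" using assms by simp
  show "model_gap (Suc T) \<longlonglongrightarrow> 0" unfolding model_gap_def qr_def qm_def using QT1 Q_Suc_T by simp
  fix n assume "t \<le> n" "n < Suc T" and next_stage: "model_gap (Suc n) \<longlonglongrightarrow> 0"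
  then have n: "n \<in> {2..T}" using assms by auto
  then have "(\<lambda>k. qr n (xk k (n - 1)) - cutval k n) \<longlonglongrightarrow> 0"
    using stage_residuals_tendsto_zero(1)[OF _ next_stage] unfolding cutval_def by auto
  then show "model_gap n \<longlonglongrightarrow> 0" by (rule model_gap_tendsto_zero_if_cuts_exact[OF n])
qed

lemma Q_after_horizon_eq_model: "Q (T + 1) y = Qk k (T + 1) y"
  using Q_Suc_T QT1 by simp

lemma Q_last_eq_Qlow: "Q T y = Qlow f X (Qk k) T y"
  unfolding Qlow_def Q_eq_INF[OF T1 order_refl] using QT1 Q_Suc_T by simp

lemma Q_last_eq_model:
  assumes "2 \<le> T" "1 \<le> k"
  shows "Q T (xk k (T - 1)) = Qk k T (xk k (T - 1))"
proof -
  have y: "xk k (T - 1) \<in> Xs (T - 1)" using xk_in_Xs assms by simp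
  then have "Qk k T (xk k (T - 1)) = max (Qk (k - 1) T (xk k (T - 1))) (Q T (xk k (T - 1)))"
    using Qk_eq_max_cut[of k T] Q_last_eq_Qlow[of _ k] assms by simp
  moreover have "Qk (k - 1) T (xk k (T - 1)) \<le> Q T (xk k (T - 1))"
    using Qk_le_Q[of T] y assms by simp
  ultimately show ?thesis by (simp add: max_def)
qed

lemma model_and_Qlow_gaps_tendsto_zero:
  assumes t: "t \<in> {2..T - 1}"
  shows "(\<lambda>k. Q t (xk k (t - 1)) - Qk k t (xk k (t - 1))) \<longlonglongrightarrow> 0"
    and "(\<lambda>k. Q t (xk k (t - 1)) - Qlow f X (Qk k) t (xk k (t - 1))) \<longlonglongrightarrow> 0"
proof -
  have t2: "t \<in> {2..T}" "t \<in> {1..T}" using t by auto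
  define x where "x k = xk k (t - 1)" for k
  have x: "x k \<in> Xs (t - 1)" if "1 \<le> k" for k unfolding x_def using xk_in_Xs[OF that, of "t - 1"] t by auto
  have Qx: "Q t (x k) = ereal (qr t (x k))" if "1 \<le> k" for k using Q_eq_qr_Xs[of t] x[OF that] t by auto
  define r1 where "r1 k = qr t (x k) - cutval k t" for k
  define r2 where "r2 k = qr t (x k) - qm k t (x k)" for k
  have "model_gap (Suc t) \<longlonglongrightarrow> 0" using model_gap_tendsto_zero[of "Suc t"] t by auto
  then have r1: "r1 \<longlonglongrightarrow> 0"
    using stage_residuals_tendsto_zero(1)[OF t2(2)] unfolding r1_def cutval_def x_def by simp
  have r2_bounds: "0 \<le> r2 k \<and> r2 k \<le> r1 k" if k: "1 \<le> k" for k
    using cut_le_Qk[OF k t2(1) x[OF k]] Qk_eq_qm[OF k _ x[OF k]] t unfolding r1_def r2_def x_def by auto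
  have r2: "r2 \<longlonglongrightarrow> 0"
  proof (rule Lim_null_comparison[OF _ tendsto_rabs_zero[OF r1]])
    show "eventually (\<lambda>k. norm (r2 k) \<le> \<bar>r1 k\<bar>) sequentially"
      using eventually_ge_at_top[of 1] by eventually_elim (use r2_bounds in fastforce)
  qed
  have "eventually (\<lambda>k. Q t (x k) - Qk k t (x k) = ereal (r2 k)) sequentially"
    using eventually_ge_at_top[of 1]
    by eventually_elim (use Qx Qk_eq_qm(1) x t in \<open>auto simp: r2_def\<close>)
  from tendsto_ereal_eventually_eq[OF this r2]
  show "(\<lambda>k. Q t (xk k (t - 1)) - Qk k t (xk k (t - 1))) \<longlonglongrightarrow> 0"
    by (simp add: x_def zero_ereal_def)
  have "eventually (\<lambda>k. Q t (x k) - Qlow f X (Qk k) t (x k) = ereal (r1 k)) sequentially"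
    using eventually_ge_at_top[of 1]
    by eventually_elim (use Qx Qlow_trial_eq_cutval t2 in \<open>auto simp: r1_def x_def\<close>)
  from tendsto_ereal_eventually_eq[OF this r1]
  show "(\<lambda>k. Q t (xk k (t - 1)) - Qlow f X (Qk k) t (xk k (t - 1))) \<longlonglongrightarrow> 0"
    by (simp add: x_def zero_ereal_def)
qed

lemma Q_first_eq_qr: "Q 1 x0 = ereal (qr 1 x0)"
  using Q_eq_qr_Xs[of 1 x0] X0 by simp

lemma eventually_xk_0: "eventually (\<lambda>k. xk k 0 = x0) sequentially"
  using eventually_ge_at_top[of 1] by eventually_elim (use fwd0 in simp)

lemma first_stage_model_gap_tendsto_zero: "model_gap (Suc 1) \<longlonglongrightarrow> 0"
  using model_gap_tendsto_zero[of 2] T1 by (simp add: numeral_2_eq_2)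

lemma Qlow_first_tendsto: "(\<lambda>k. Qlow f X (Qk k) 1 x0) \<longlonglongrightarrow> Q 1 x0"
proof -
  have "(\<lambda>k. qr 1 (xk k 0) - real_of_ereal (Qlow f X (Qk k) 1 (xk k 0))) \<longlonglongrightarrow> 0"
    using stage_residuals_tendsto_zero(1)[OF _ first_stage_model_gap_tendsto_zero] T1 by simp
  then have "(\<lambda>k. qr 1 x0 - real_of_ereal (Qlow f X (Qk k) 1 x0)) \<longlonglongrightarrow> 0"
    by (rule Lim_transform_eventually) (use eventually_xk_0 in \<open>eventually_elim, simp\<close>)
  then have "(\<lambda>k. qr 1 x0 - (qr 1 x0 - real_of_ereal (Qlow f X (Qk k) 1 x0))) \<longlonglongrightarrow> qr 1 x0 - 0"
    by (intro tendsto_diff tendsto_const)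
  moreover have "eventually (\<lambda>k. Qlow f X (Qk k) 1 x0 = ereal (real_of_ereal (Qlow f X (Qk k) 1 x0))) sequentially"
    using eventually_conj[OF eventually_ge_at_top[of 2] eventually_xk_0]
    by eventually_elim (use stage_gap_bounds(1)[of _ 1] T1 in auto)
  ultimately show ?thesis using tendsto_ereal_eventually_eq Q_first_eq_qr by simp
qed

lemma Fbar_first_tendsto: "(\<lambda>k. Fbar f (Qk (k - 1)) (lam 1 k) 1 x0 (xk k 1) (xP 1 k)) \<longlonglongrightarrow> Q 1 x0"
proof -
  have "(\<lambda>k. Fr k 1 (xk k 1) - qr 1 (xk k 0)) \<longlonglongrightarrow> 0"
    using stage_residuals_tendsto_zero(2)[OF _ first_stage_model_gap_tendsto_zero] T1 by simp
  then have "(\<lambda>k. Fr k 1 (xk k 1) - qr 1 x0) \<longlonglongrightarrow> 0"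
    by (rule Lim_transform_eventually) (use eventually_xk_0 in \<open>eventually_elim, simp\<close>)
  then have "(\<lambda>k. qr 1 x0 + (Fr k 1 (xk k 1) - qr 1 x0)) \<longlonglongrightarrow> qr 1 x0 + 0"
    by (intro tendsto_add tendsto_const)
  moreover have "eventually (\<lambda>k. Fbar f (Qk (k - 1)) (lam 1 k) 1 x0 (xk k 1) (xP 1 k)
      = ereal (qr 1 x0 + (Fr k 1 (xk k 1) - qr 1 x0))) sequentially"
    using eventually_conj[OF eventually_ge_at_top[of 2] eventually_xk_0]
    by eventually_elim (use Fbar_eq_Fr[of _ 1] xk_in_Xs[of _ 1] T1 in auto)
  ultimately show ?thesis using tendsto_ereal_eventually_eq Q_first_eq_qr by simp
qed

definition "trial_cost k = (\<Sum>t = 1..T. fr t (xk k (t - 1)) (xk k t))"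

lemma feasible_xk: "1 \<le> k \<Longrightarrow> feasible_traj X T x0 (xk k)"
  unfolding feasible_traj_def using fwd0 xk_in_X by auto

lemma objective_xk:
  assumes k: "1 \<le> k"
  shows "objective f T (xk k) = ereal (trial_cost k)"
proof -
  have "f t (xk k (t - 1)) (xk k t) = ereal (fr t (xk k (t - 1)) (xk k t))" if t: "t \<in> {1..T}" for t
    using f_eq_fr_Xs xk_in_Xs[OF k] t by auto
  then show ?thesis unfolding objective_def trial_cost_def by simp
qed

text \<open>The cost of the \<open>k\<close>-th trajectory telescopes into \<open>Q\<^sub>1(x\<^sub>0)\<close> plus the stage residuals
  \<open>f\<^sub>t(x\<^sub>t\<^sub>-\<^sub>1, x\<^sub>t) + Q\<^sub>t\<^sub>+\<^sub>1(x\<^sub>t) - Q\<^sub>t(x\<^sub>t\<^sub>-\<^sub>1)\<close>, which all vanish.\<close>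
lemma trial_cost_tendsto: "trial_cost \<longlonglongrightarrow> qr 1 x0"
proof -
  define s where "s t k = fr t (xk k (t - 1)) (xk k t) + qr (Suc t) (xk k t) - qr t (xk k (t - 1))" for t k
  have "s t \<longlonglongrightarrow> 0" if t: "t \<in> {1..T}" for t
    unfolding s_def using stage_residuals_tendsto_zero(3)[OF t] model_gap_tendsto_zero[of "Suc t"] t
    by auto
  then have "(\<lambda>k. qr 1 x0 + (\<Sum>t = 1..T. s t k)) \<longlonglongrightarrow> qr 1 x0 + (\<Sum>t = 1..T. 0)"
    by (intro tendsto_add tendsto_const tendsto_sum) auto
  moreover have "eventually (\<lambda>k. qr 1 x0 + (\<Sum>t = 1..T. s t k) = trial_cost k) sequentially"
    using eventually_xk_0
  proof eventually_elim
    case (elim k)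
    define \<phi> where "\<phi> i = qr i (xk k (i - 1))" for i
    have "(\<Sum>t = 1..T. s t k) = trial_cost k + (\<Sum>t = 1..T. \<phi> (Suc t) - \<phi> t)"
      unfolding s_def \<phi>_def trial_cost_def sum.distrib[symmetric]
      by (intro sum.cong) (simp_all add: algebra_simps)
    also have "(\<Sum>t = 1..T. \<phi> (Suc t) - \<phi> t) = \<phi> (Suc T) - \<phi> 1" by (rule sum_Suc_diff) (use T1 in simp)
    also have "\<phi> (Suc T) = 0" unfolding \<phi>_def qr_def using Q_Suc_T by simp
    also have "\<phi> 1 = qr 1 x0" unfolding \<phi>_def using elim by simp
    finally show ?case by simp
  qed
  ultimately show ?thesis by (simp add: tendsto_cong)
qed

lemma Q_le_tail_cost:
  assumes y: "feasible_traj X T x0 y" and t: "1 \<le> t" "t \<le> Suc T"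
  shows "Q t (y (t - 1)) \<le> (\<Sum>s = t..T. f s (y (s - 1)) (y s))"
  using t(2)
proof (induction t rule: inc_induct)
  case base
  then show ?case using Q_Suc_T by simp
next
  case (step n)
  have n1: "1 \<le> n" "n \<le> T" using step t by auto
  have "y n \<in> X n (y (n - 1))" using y n1 unfolding feasible_traj_def by auto
  then have "Q n (y (n - 1)) \<le> f n (y (n - 1)) (y n) + Q (Suc n) (y n)"
    unfolding Q_eq_INF[OF n1] by (rule INF_lower)
  also have "\<dots> \<le> f n (y (n - 1)) (y n) + (\<Sum>s = Suc n..T. f s (y (s - 1)) (y s))"
    using step.IH by (intro add_left_mono) simp
  also have "\<dots> = (\<Sum>s = n..T. f s (y (s - 1)) (y s))" using n1 by (simp add: sum.atLeast_Suc_atMost)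
  finally show ?case .
qed

lemma Q_first_eq_optval: "Q 1 x0 = optval f X T x0"
proof (rule antisym)
  show "Q 1 x0 \<le> optval f X T x0"
    unfolding optval_def objective_def
    using Q_le_tail_cost[of _ 1] by (intro INF_greatest) (auto simp: feasible_traj_def)
  have "optval f X T x0 \<le> ereal (trial_cost k)" if "1 \<le> k" for k
    unfolding optval_def objective_xk[OF that, symmetric] using feasible_xk[OF that] by (intro INF_lower) simp
  then have "optval f X T x0 \<le> ereal (qr 1 x0)"
    using Lim_bounded2[OF tendsto_ereal[OF trial_cost_tendsto]] by blast
  then show "optval f X T x0 \<le> Q 1 x0" using Q_first_eq_qr by simp
qed

definition "trial_limit r xs \<longleftrightarrow>
    xs 0 = x0 \<and> strict_mono r \<and> (\<forall>t\<in>{1..T}. (\<lambda>j. xk (r j) t) \<longlonglongrightarrow> xs t)"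

lemma eventually_subseq_ge_1:
  assumes "trial_limit r xs"
  shows "eventually (\<lambda>j. 1 \<le> r j) sequentially"
proof -
  have r: "strict_mono r" using assms unfolding trial_limit_def by simp
  show ?thesis
    using eventually_ge_at_top[of 1] by eventually_elim (use r seq_suble le_trans in blast)
qed

lemma trial_limit_tendsto:
  assumes lim: "trial_limit r xs" and t: "t \<le> T"
  shows "(\<lambda>j. xk (r j) t) \<longlonglongrightarrow> xs t"
proof (cases "t = 0")
  case True
  have "eventually (\<lambda>j. xk (r j) t = xs t) sequentially"
    using eventually_subseq_ge_1[OF lim] by eventually_elim (use lim True fwd0 in \<open>simp add: trial_limit_def\<close>)
  then show ?thesis by (rule tendsto_eventually)
qed (use lim t in \<open>auto simp: trial_limit_def\<close>)

lemma trial_limit_feasible: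
  assumes lim: "trial_limit r xs"
  shows "feasible_traj X T x0 xs"
  unfolding feasible_traj_def
proof (intro conjI ballI)
  show "xs 0 = x0" using lim unfolding trial_limit_def by simp
  fix t assume t: "t \<in> {1..T}"
  define y where "y j = xk (r j) (t - 1)" for j
  define z where "z j = xk (r j) t" for j
  have y: "y \<longlonglongrightarrow> xs (t - 1)" and z: "z \<longlonglongrightarrow> xs t"
    unfolding y_def z_def using trial_limit_tendsto[OF lim] t by auto
  have evX: "eventually (\<lambda>j. z j \<in> X t (y j)) sequentially"
    using eventually_subseq_ge_1[OF lim] by eventually_elim (use xk_in_X t in \<open>auto simp: y_def z_def\<close>)
  have "xs t \<in> Xs t"
  proof (rule Lim_in_closed_set[OF _ _ trivial_limit_sequentially z])
    show "closed (Xs t)" using Xs_nonempty_convex_compact[of t] t by (simp add: compact_imp_closed)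
    show "eventually (\<lambda>j. z j \<in> Xs t) sequentially"
      using evX by eventually_elim (use X_subset in blast)
  qed
  moreover have "A t *v xs t + B t *v xs (t - 1) = b t"
  proof (rule LIMSEQ_unique)
    show "(\<lambda>j. A t *v z j + B t *v y j) \<longlonglongrightarrow> A t *v xs t + B t *v xs (t - 1)"
      by (intro tendsto_add bounded_linear.tendsto[OF matrix_vector_mul_bounded_linear] y z)
    have "eventually (\<lambda>j. A t *v z j + B t *v y j = b t) sequentially"
      using evX by eventually_elim (simp add: mem_X_iff)
    then show "(\<lambda>j. A t *v z j + B t *v y j) \<longlonglongrightarrow> b t" by (rule tendsto_eventually)
  qed
  moreover have "g t (xs (t - 1)) (xs t) $ i \<le> 0" for i
  proof -
    have "lsc_real (\<lambda>(y, x). g t y x $ i)" using H0c t by auto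
    then have "closed {p. (\<lambda>(y, x). g t y x $ i) p \<le> 0}" unfolding lsc_real_def by blast
    moreover have "eventually (\<lambda>j. (y j, z j) \<in> {p. (\<lambda>(y, x). g t y x $ i) p \<le> 0}) sequentially"
      using evX by eventually_elim (simp add: mem_X_iff)
    ultimately have "(xs (t - 1), xs t) \<in> {p. (\<lambda>(y, x). g t y x $ i) p \<le> 0}"
      using tendsto_Pair[OF y z] by (intro Lim_in_closed_set[OF _ _ trivial_limit_sequentially])
    then show ?thesis by simp
  qed
  ultimately show "xs t \<in> X t (xs (t - 1))" unfolding mem_X_iff by auto
qed

lemma trial_limit_stage_cost_eventually_gt:
  assumes lim: "trial_limit r xs" and t: "t \<in> {1..T}" and a: "ereal a < f t (xs (t - 1)) (xs t)"
  shows "eventually (\<lambda>j. a < fr t (xk (r j) (t - 1)) (xk (r j) t)) sequentially"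
proof -
  define S where "S = {p. ereal a < case_prod (f t) p}"
  have "open S" unfolding S_def using H0b t by (intro lsc_fun_open_superlevel) auto
  moreover have "(xs (t - 1), xs t) \<in> S" unfolding S_def using a by simp
  moreover have "(\<lambda>j. (xk (r j) (t - 1), xk (r j) t)) \<longlonglongrightarrow> (xs (t - 1), xs t)"
    using t by (intro tendsto_Pair trial_limit_tendsto[OF lim]) auto
  ultimately have "eventually (\<lambda>j. (xk (r j) (t - 1), xk (r j) t) \<in> S) sequentially"
    using topological_tendstoD by blast
  then show ?thesis
    using eventually_subseq_ge_1[OF lim]
  proof eventually_elim
    case (elim j)
    have "f t (xk (r j) (t - 1)) (xk (r j) t) = ereal (fr t (xk (r j) (t - 1)) (xk (r j) t))"
      using f_eq_fr_Xs xk_in_Xs elim t by auto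
    then show ?case using elim unfolding S_def by simp
  qed
qed

lemma trial_limit_objective_le:
  assumes lim: "trial_limit r xs"
  shows "objective f T xs \<le> Q 1 x0"
proof -
  have xs: "xs t \<in> Xs t" if "t \<le> T" for t
  proof (cases "t = 0")
    case False
    then have "xs t \<in> X t (xs (t - 1))"
      using trial_limit_feasible[OF lim] that unfolding feasible_traj_def by auto
    then show ?thesis using X_subset by blast
  qed (use lim X0 in \<open>simp add: trial_limit_def\<close>)
  define \<alpha> where "\<alpha> t = fr t (xs (t - 1)) (xs t)" for t
  have f\<alpha>: "f t (xs (t - 1)) (xs t) = ereal (\<alpha> t)" if t: "t \<in> {1..T}" for t
    unfolding \<alpha>_def using f_eq_fr_Xs xs t by auto
  have below: "(\<Sum>t = 1..T. \<alpha> t) - real T * \<eta> \<le> qr 1 x0" if eta: "\<eta> > 0" for \<eta>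
  proof -
    have "eventually (\<lambda>j. \<forall>t\<in>{1..T}. \<alpha> t - \<eta> < fr t (xk (r j) (t - 1)) (xk (r j) t)) sequentially"
      using f\<alpha> eta by (intro eventually_ball_finite ballI trial_limit_stage_cost_eventually_gt[OF lim]) auto
    then have "eventually (\<lambda>j. (\<Sum>t = 1..T. \<alpha> t) - real T * \<eta> \<le> trial_cost (r j)) sequentially"
    proof eventually_elim
      case (elim j)
      then have "(\<Sum>t = 1..T. \<alpha> t - \<eta>) \<le> trial_cost (r j)"
        unfolding trial_cost_def by (intro sum_mono) (simp add: less_imp_le)
      then show ?case by (simp add: sum_subtractf)
    qed
    moreover have "(\<lambda>j. trial_cost (r j)) \<longlonglongrightarrow> qr 1 x0"
      using LIMSEQ_subseq_LIMSEQ[OF trial_cost_tendsto] lim unfolding trial_limit_def o_def by blast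
    ultimately show ?thesis by (intro tendsto_lowerbound[OF _ _ trivial_limit_sequentially])
  qed
  have "(\<Sum>t = 1..T. \<alpha> t) \<le> qr 1 x0"
  proof (rule field_le_epsilon)
    fix e :: real assume "0 < e"
    then show "(\<Sum>t = 1..T. \<alpha> t) \<le> qr 1 x0 + e" using below[of "e / real T"] T1 by simp
  qed
  then show ?thesis unfolding objective_def using f\<alpha> Q_first_eq_qr by simp
qed

lemma trial_limit_optimal:
  assumes "trial_limit r xs"
  shows "optimal_solution f X T x0 xs"
  unfolding optimal_solution_def
proof (intro conjI allI impI)
  show "feasible_traj X T x0 xs" using trial_limit_feasible[OF assms] .
  fix y assume "feasible_traj X T x0 y"
  then have "optval f X T x0 \<le> objective f T y" unfolding optval_def by (intro INF_lower) simp
  then show "objective f T xs \<le> objective f T y"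
    using trial_limit_objective_le[OF assms] Q_first_eq_optval by simp
qed

end

text \<open>Hypothesis (H0)(e) only guarantees that the subgradients \<open>\<beta>\<^sub>t\<^sup>k\<close> exist, which the backward
  pass already provides.\<close>
theorem mainTheorem3:
  fixes T :: nat and x0 :: "real^'n"
    and Xs :: "nat \<Rightarrow> (real^'n) set"
    and f :: "nat \<Rightarrow> real^'n \<Rightarrow> real^'n \<Rightarrow> ereal"
    and g :: "nat \<Rightarrow> real^'n \<Rightarrow> real^'n \<Rightarrow> real^'p"
    and A B :: "nat \<Rightarrow> real^'n^'q" and b :: "nat \<Rightarrow> real^'q"
    and lam :: "nat \<Rightarrow> nat \<Rightarrow> real"
    and xP :: "nat \<Rightarrow> nat \<Rightarrow> real^'n"
    and xk :: "nat \<Rightarrow> nat \<Rightarrow> real^'n"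
    and Qk :: "nat \<Rightarrow> nat \<Rightarrow> real^'n \<Rightarrow> ereal"
    and beta :: "nat \<Rightarrow> nat \<Rightarrow> real^'n"
  defines "X \<equiv> Xfeas Xs A B b g"
  assumes T1: "T \<ge> 1"
    and X0: "Xs 0 = {x0}"
    \<comment> \<open>(H0)(a)\<close>
    and H0a: "\<forall>t\<in>{1..T}. Xs t \<noteq> {} \<and> convex (Xs t) \<and> compact (Xs t)"
    \<comment> \<open>(H0)(b)\<close>
    and H0b: "\<forall>t\<in>{1..T}. proper_fun (case_prod (f t)) \<and> convex_fun (case_prod (f t))
                 \<and> lsc_fun (case_prod (f t))"
    \<comment> \<open>(H0)(c)\<close>
    and H0c: "\<forall>t\<in>{1..T}. \<forall>i. convex_on UNIV (\<lambda>(y, x). g t y x $ i)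
                 \<and> lsc_real (\<lambda>(y, x). g t y x $ i)"
    \<comment> \<open>(H0)(d)\<close>
    and H0d: "\<forall>t\<in>{1..T}. \<exists>\<epsilon>>0.
                 (\<forall>y\<in>enlarge \<epsilon> (Xs (t - 1)). \<forall>x\<in>Xs t. f t y x \<noteq> \<infinity>)
               \<and> (\<forall>y\<in>enlarge \<epsilon> (Xs (t - 1)). \<exists>x\<in>Xs t.
                     (\<forall>i. g t y x $ i \<le> 0) \<and> A t *v x + B t *v y = b t)"
    \<comment> \<open>(H0)(e)\<close>
    and H0e: "\<forall>t\<in>{2..T}. \<exists>yb xb.
                 (yb, xb) \<in> (Xs (t - 1) \<times> rel_interior (Xs t))
                            \<inter> rel_interior {(y, x). \<forall>i. g t y x $ i \<le> 0}
               \<and> xb \<in> Xs t \<and> (\<forall>i. g t yb xb $ i \<le> 0) \<and> A t *v xb + B t *v yb = b t"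
    \<comment> \<open>REDDP: initial cuts Q_t^0 \<le> Q_t on X_{t-1}, with values in R \<union> {-\<infinity>}\<close>
    and init: "\<forall>t\<in>{2..T}. \<forall>y\<in>Xs (t - 1). Qk 0 t y \<noteq> \<infinity> \<and> Qk 0 t y \<le> Qval f X T t y"
    and QT1: "\<forall>k. Qk k (T + 1) = (\<lambda>_. 0)"
    \<comment> \<open>penalization parameters\<close>
    and lam_nonneg: "\<forall>t\<in>{1..T}. \<forall>k\<ge>1. lam t k \<ge> 0"
    and lam_1: "\<forall>t\<in>{1..T}. lam t 1 = 0"
    and lam_T: "\<forall>k\<ge>1. lam T k = 0"
    and lam_lim: "\<forall>t\<in>{1..T-1}. (\<lambda>k. lam t k) \<longlonglongrightarrow> 0"
    \<comment> \<open>prox-centers\<close>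
    and xP_in: "\<forall>t\<in>{1..T}. \<forall>k\<ge>1. xP t k \<in> Xs t"
    \<comment> \<open>forward pass\<close>
    and fwd0: "\<forall>k\<ge>1. xk k 0 = x0"
    and fwd: "\<forall>k\<ge>1. \<forall>t\<in>{1..T}. xk k t \<in> X t (xk k (t - 1)) \<and>
                 (\<forall>z\<in>X t (xk k (t - 1)).
                    Fbar f (Qk (k - 1)) (lam t k) t (xk k (t - 1)) (xk k t) (xP t k)
                    \<le> Fbar f (Qk (k - 1)) (lam t k) t (xk k (t - 1)) z (xP t k))"
    \<comment> \<open>backward pass\<close>
    and bwd: "\<forall>k\<ge>1. \<forall>t\<in>{2..T}.
                 is_subgrad (Qlow f X (Qk k) t) (xk k (t - 1)) (beta k t) \<and>
                 (\<forall>y\<in>Xs (t - 1). Qk k t y = max (Qk (k - 1) t y)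
                    (Qlow f X (Qk k) t (xk k (t - 1)) + ereal (beta k t \<bullet> (y - xk k (t - 1)))))"
  shows "(\<forall>k\<ge>1. Qval f X T (T + 1) (xk k T) = Qk k (T + 1) (xk k T))
    \<and> (\<forall>k\<ge>1. Qval f X T T (xk k (T - 1)) = Qlow f X (Qk k) T (xk k (T - 1)))
    \<and> (T \<ge> 2 \<longrightarrow> (\<forall>k\<ge>1. Qval f X T T (xk k (T - 1)) = Qk k T (xk k (T - 1))))
    \<and> (\<forall>t\<in>{2..T-1}.
          ((\<lambda>k. Qval f X T t (xk k (t - 1)) - Qk k t (xk k (t - 1))) \<longlonglongrightarrow> 0)
        \<and> ((\<lambda>k. Qval f X T t (xk k (t - 1)) - Qlow f X (Qk k) t (xk k (t - 1))) \<longlonglongrightarrow> 0))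
    \<and> ((\<lambda>k. Qlow f X (Qk k) 1 x0) \<longlonglongrightarrow> Qval f X T 1 x0)
    \<and> ((\<lambda>k. Fbar f (Qk (k - 1)) (lam 1 k) 1 x0 (xk k 1) (xP 1 k)) \<longlonglongrightarrow> Qval f X T 1 x0)
    \<and> Qval f X T 1 x0 = optval f X T x0
    \<and> (\<forall>xs r. xs 0 = x0 \<and> strict_mono r \<and> (\<forall>t\<in>{1..T}. (\<lambda>j. xk (r j) t) \<longlonglongrightarrow> xs t)
          \<longrightarrow> optimal_solution f X T x0 xs)"
proof -
  interpret reddp T x0 Xs f g A B b lam xP xk Qk beta X
    by unfold_locales (fact X_def[THEN meta_eq_to_obj_eq] T1 X0 H0a H0b H0c H0d init QT1 lam_nonneg
        lam_T lam_lim xP_in fwd0 fwd bwd)+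
  show ?thesis
  proof (intro conjI allI impI ballI)
    fix k :: nat
    show "Q (T + 1) (xk k T) = Qk k (T + 1) (xk k T)" by (rule Q_after_horizon_eq_model)
    show "Q T (xk k (T - 1)) = Qlow f X (Qk k) T (xk k (T - 1))" by (rule Q_last_eq_Qlow)
    assume "2 \<le> T" "1 \<le> k"
    then show "Q T (xk k (T - 1)) = Qk k T (xk k (T - 1))" by (rule Q_last_eq_model)
  next
    fix t assume "t \<in> {2..T - 1}"
    then show "(\<lambda>k. Q t (xk k (t - 1)) - Qk k t (xk k (t - 1))) \<longlonglongrightarrow> 0"
      and "(\<lambda>k. Q t (xk k (t - 1)) - Qlow f X (Qk k) t (xk k (t - 1))) \<longlonglongrightarrow> 0"
      by (rule model_and_Qlow_gaps_tendsto_zero)+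
  next
    fix xs r assume "xs 0 = x0 \<and> strict_mono r \<and> (\<forall>t\<in>{1..T}. (\<lambda>j. xk (r j) t) \<longlonglongrightarrow> xs t)"
    then show "optimal_solution f X T x0 xs" by (intro trial_limit_optimal[of r]) (simp add: trial_limit_def)
  qed (fact Qlow_first_tendsto Fbar_first_tendsto Q_first_eq_optval)+
qed

end
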